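(* Let $\mathbb{K}$ be a field of characteristic $0$. Suppose $\mathcal{A}$ is a $2n$-dimensional Poincaré CDGA over $\mathbb{K}$ with trivial differential, and let $\omega\in\mathcal{A}^{2n}$ be the dual of the Poincaré class. Assume also that $\mathcal{A}^i=0$ for $i<0$. Let $\theta$ be a new element of degree $2n-1$ and $\mathcal{A}_\theta=\mathcal{A}\otimes\Lambda\theta$ with $d\theta=\omega$. If $\mathcal{A}_\theta$ is formal, then $\mathcal{A}^{2i+1}=0$ for all $i\in\mathbb{Z}$.
   Context: A finite-dimensional graded commutative algebra $H$ is $n$-dimensional Poincaré if there exists $\alpha_H\in(H^n)^\vee$ (the Poincaré class) such that $H^i\to(H^{n-i})^\vee$, $x\mapsto(y\mapsto\alpha_H(xy))$, is an isomorphism for all $i$; a CDGA is Poincaré if its cohomology is. The dual of the Poincaré class is the element of top degree $\omega$ paired to $\alpha_H$, i.e. with $\alpha_H(\omega)=1$ spanning the top degree. $\mathcal{A}_\theta=\{x+\theta y:x,y\in\mathcal{A}\}$ ($\theta^2=0$ since $\theta$ has odd degree). A CDGA is formal if it is connected to its cohomology by a zigzag of quasi-isomorphisms. *)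

theory Defs
  imports Main
begin

text \<open>A (cohomologically) graded commutative differential graded algebra over a field 'k,
  presented degreewise: for each degree i a set of homogeneous elements cmp i, which is a
  'k-vector space with zero zr i, addition ad i and scalar multiplication sc i;
  multiplication ml i j : A^i x A^j -> A^(i+j); unit un in A^0; differential
  df i : A^i -> A^(i+1).  The CDGA is the (external) direct sum of the A^i.\<close>

record ('k, 'a) cdga =
  cmp :: "int \<Rightarrow> 'a set"
  zr  :: "int \<Rightarrow> 'a"
  ad  :: "int \<Rightarrow> 'a \<Rightarrow> 'a \<Rightarrow> 'a"
  sc  :: "int \<Rightarrow> 'k \<Rightarrow> 'a \<Rightarrow> 'a"
  ml  :: "int \<Rightarrow> int \<Rightarrow> 'a \<Rightarrow> 'a \<Rightarrow> 'a"
  un  :: "'a"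
  df  :: "int \<Rightarrow> 'a \<Rightarrow> 'a"

definition psign :: "int \<Rightarrow> 'k::field" where
  "psign i = (if even i then 1 else -1)"

definition vs_on :: "'a set \<Rightarrow> 'a \<Rightarrow> ('a \<Rightarrow> 'a \<Rightarrow> 'a) \<Rightarrow> ('k::field \<Rightarrow> 'a \<Rightarrow> 'a) \<Rightarrow> bool" where
  "vs_on V z a s \<longleftrightarrow>
     z \<in> V \<and> (\<forall>x\<in>V. \<forall>y\<in>V. a x y \<in> V) \<and> (\<forall>c. \<forall>x\<in>V. s c x \<in> V)
   \<and> (\<forall>x\<in>V. \<forall>y\<in>V. \<forall>w\<in>V. a (a x y) w = a x (a y w))
   \<and> (\<forall>x\<in>V. \<forall>y\<in>V. a x y = a y x)
   \<and> (\<forall>x\<in>V. a z x = x)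
   \<and> (\<forall>x\<in>V. a x (s (-1) x) = z)
   \<and> (\<forall>c. \<forall>x\<in>V. \<forall>y\<in>V. s c (a x y) = a (s c x) (s c y))
   \<and> (\<forall>c d. \<forall>x\<in>V. s (c + d) x = a (s c x) (s d x))
   \<and> (\<forall>c d. \<forall>x\<in>V. s (c * d) x = s c (s d x))
   \<and> (\<forall>x\<in>V. s 1 x = x)"

definition is_cdga :: "('k::field, 'a) cdga \<Rightarrow> bool" where
  "is_cdga A \<longleftrightarrow>
     (\<forall>i. vs_on (cmp A i) (zr A i) (ad A i) (sc A i))
   \<and> (\<forall>i j. \<forall>x\<in>cmp A i. \<forall>y\<in>cmp A j. ml A i j x y \<in> cmp A (i + j))
   \<and> (\<forall>i j. \<forall>x\<in>cmp A i. \<forall>x'\<in>cmp A i. \<forall>y\<in>cmp A j.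
        ml A i j (ad A i x x') y = ad A (i + j) (ml A i j x y) (ml A i j x' y))
   \<and> (\<forall>i j. \<forall>x\<in>cmp A i. \<forall>y\<in>cmp A j. \<forall>y'\<in>cmp A j.
        ml A i j x (ad A j y y') = ad A (i + j) (ml A i j x y) (ml A i j x y'))
   \<and> (\<forall>i j c. \<forall>x\<in>cmp A i. \<forall>y\<in>cmp A j.
        ml A i j (sc A i c x) y = sc A (i + j) c (ml A i j x y)
      \<and> ml A i j x (sc A j c y) = sc A (i + j) c (ml A i j x y))
   \<and> (\<forall>i j k. \<forall>x\<in>cmp A i. \<forall>y\<in>cmp A j. \<forall>z\<in>cmp A k.
        ml A (i + j) k (ml A i j x y) z = ml A i (j + k) x (ml A j k y z))
   \<and> un A \<in> cmp A 0
   \<and> (\<forall>i. \<forall>x\<in>cmp A i. ml A 0 i (un A) x = x \<and> ml A i 0 x (un A) = x)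
   \<and> (\<forall>i j. \<forall>x\<in>cmp A i. \<forall>y\<in>cmp A j.
        ml A i j x y = sc A (i + j) (psign (i * j)) (ml A j i y x))
   \<and> (\<forall>i. \<forall>x\<in>cmp A i. df A i x \<in> cmp A (i + 1))
   \<and> (\<forall>i. \<forall>x\<in>cmp A i. \<forall>y\<in>cmp A i. df A i (ad A i x y) = ad A (i + 1) (df A i x) (df A i y))
   \<and> (\<forall>i c. \<forall>x\<in>cmp A i. df A i (sc A i c x) = sc A (i + 1) c (df A i x))
   \<and> (\<forall>i. \<forall>x\<in>cmp A i. df A (i + 1) (df A i x) = zr A (i + 2))
   \<and> (\<forall>i j. \<forall>x\<in>cmp A i. \<forall>y\<in>cmp A j.
        df A (i + j) (ml A i j x y)
        = ad A (i + j + 1) (ml A (i + 1) j (df A i x) y)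
                           (sc A (i + j + 1) (psign i) (ml A i (j + 1) x (df A j y))))"

definition cdga_hom :: "('k::field, 'a) cdga \<Rightarrow> ('k, 'b) cdga \<Rightarrow> (int \<Rightarrow> 'a \<Rightarrow> 'b) \<Rightarrow> bool" where
  "cdga_hom A B f \<longleftrightarrow>
     (\<forall>i. \<forall>x\<in>cmp A i. f i x \<in> cmp B i)
   \<and> (\<forall>i. \<forall>x\<in>cmp A i. \<forall>y\<in>cmp A i. f i (ad A i x y) = ad B i (f i x) (f i y))
   \<and> (\<forall>i c. \<forall>x\<in>cmp A i. f i (sc A i c x) = sc B i c (f i x))
   \<and> (\<forall>i j. \<forall>x\<in>cmp A i. \<forall>y\<in>cmp A j. f (i + j) (ml A i j x y) = ml B i j (f i x) (f j y))
   \<and> f 0 (un A) = un B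
   \<and> (\<forall>i. \<forall>x\<in>cmp A i. f (i + 1) (df A i x) = df B i (f i x))"

definition cocyc :: "('k::field, 'a) cdga \<Rightarrow> int \<Rightarrow> 'a set" where
  "cocyc A i = {x \<in> cmp A i. df A i x = zr A (i + 1)}"

definition cobdry :: "('k::field, 'a) cdga \<Rightarrow> int \<Rightarrow> 'a set" where
  "cobdry A i = df A (i - 1) ` cmp A (i - 1)"

text \<open>Quasi-isomorphism: a CDGA morphism whose induced map H^i(A) -> H^i(B) is injective and
  surjective for every i (written out on representatives).\<close>
definition quasi_iso :: "('k::field, 'a) cdga \<Rightarrow> ('k, 'b) cdga \<Rightarrow> (int \<Rightarrow> 'a \<Rightarrow> 'b) \<Rightarrow> bool" where
  "quasi_iso A B f \<longleftrightarrow> is_cdga A \<and> is_cdga B \<and> cdga_hom A B f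
   \<and> (\<forall>i. (\<forall>z\<in>cocyc A i. f i z \<in> cobdry B i \<longrightarrow> z \<in> cobdry A i)
        \<and> (\<forall>w\<in>cocyc B i. \<exists>z\<in>cocyc A i. ad B i (f i z) (sc B i (-1) w) \<in> cobdry B i))"

definition coset :: "('k::field, 'a) cdga \<Rightarrow> int \<Rightarrow> 'a \<Rightarrow> 'a set" where
  "coset A i z = {ad A i z b | b. b \<in> cobdry A i}"

definition crep :: "('k::field, 'a) cdga \<Rightarrow> int \<Rightarrow> 'a set \<Rightarrow> 'a" where
  "crep A i X = (SOME z. z \<in> cocyc A i \<and> X = coset A i z)"

definition cohom :: "('k::field, 'a) cdga \<Rightarrow> ('k, 'a set) cdga" where
  "cohom A = \<lparr> cmp = (\<lambda>i. coset A i ` cocyc A i),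
               zr = (\<lambda>i. coset A i (zr A i)),
               ad = (\<lambda>i X Y. coset A i (ad A i (crep A i X) (crep A i Y))),
               sc = (\<lambda>i c X. coset A i (sc A i c (crep A i X))),
               ml = (\<lambda>i j X Y. coset A (i + j) (ml A i j (crep A i X) (crep A j Y))),
               un = coset A 0 (un A),
               df = (\<lambda>i X. coset A (i + 1) (zr A (i + 1))) \<rparr>"

text \<open>Formality: a zigzag of quasi-isomorphisms between A and H(A); the intermediate CDGAs
  live in a type 'z (the theorem is stated for an arbitrary type 'z).\<close>
definition qlink :: "('k::field, 'a) cdga \<Rightarrow> ('k, 'b) cdga \<Rightarrow> bool" where
  "qlink A B \<longleftrightarrow> (\<exists>f. quasi_iso A B f) \<or> (\<exists>g. quasi_iso B A g)"

definition zigzag_via :: "('k::field, 'z) cdga list \<Rightarrow> ('k, 'a) cdga \<Rightarrow> ('k, 'b) cdga \<Rightarrow> bool" where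
  "zigzag_via cs A B \<longleftrightarrow>
     (cs = [] \<and> qlink A B)
   \<or> (cs \<noteq> [] \<and> (\<forall>C\<in>set cs. is_cdga C) \<and> qlink A (hd cs)
      \<and> (\<forall>k. Suc k < length cs \<longrightarrow> qlink (cs ! k) (cs ! Suc k)) \<and> qlink (last cs) B)"

definition formal_in :: "'z itself \<Rightarrow> ('k::field, 'a) cdga \<Rightarrow> bool" where
  "formal_in T A \<longleftrightarrow> (\<exists>cs :: ('k, 'z) cdga list. zigzag_via cs A (cohom A))"

inductive_set gspan :: "('k::field, 'a) cdga \<Rightarrow> int \<Rightarrow> 'a set \<Rightarrow> 'a set"
  for G :: "('k, 'a) cdga" and i :: int and S :: "'a set" where
  gspan_zero: "zr G i \<in> gspan G i S"
| gspan_gen: "x \<in> S \<Longrightarrow> x \<in> gspan G i S"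
| gspan_add: "x \<in> gspan G i S \<Longrightarrow> y \<in> gspan G i S \<Longrightarrow> ad G i x y \<in> gspan G i S"
| gspan_sc: "x \<in> gspan G i S \<Longrightarrow> sc G i c x \<in> gspan G i S"

definition fin_dim_ga :: "('k::field, 'a) cdga \<Rightarrow> bool" where
  "fin_dim_ga G \<longleftrightarrow> finite {i. cmp G i \<noteq> {zr G i}}
     \<and> (\<forall>i. \<exists>S. finite S \<and> S \<subseteq> cmp G i \<and> cmp G i \<subseteq> gspan G i S)"

definition lin_functional :: "('k::field, 'a) cdga \<Rightarrow> int \<Rightarrow> ('a \<Rightarrow> 'k) \<Rightarrow> bool" where
  "lin_functional G i \<phi> \<longleftrightarrow>
     (\<forall>x\<in>cmp G i. \<forall>y\<in>cmp G i. \<phi> (ad G i x y) = \<phi> x + \<phi> y)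
   \<and> (\<forall>c. \<forall>x\<in>cmp G i. \<phi> (sc G i c x) = c * \<phi> x)"

definition poincare_class :: "('k::field, 'a) cdga \<Rightarrow> int \<Rightarrow> ('a \<Rightarrow> 'k) \<Rightarrow> bool" where
  "poincare_class G n \<alpha> \<longleftrightarrow> lin_functional G n \<alpha>
   \<and> (\<forall>i. (\<forall>x\<in>cmp G i. (\<forall>y\<in>cmp G (n - i). \<alpha> (ml G i (n - i) x y) = 0) \<longrightarrow> x = zr G i)
        \<and> (\<forall>\<phi>. lin_functional G (n - i) \<phi> \<longrightarrow>
              (\<exists>x\<in>cmp G i. \<forall>y\<in>cmp G (n - i). \<phi> y = \<alpha> (ml G i (n - i) x y))))"

definition poincare_ga :: "('k::field, 'a) cdga \<Rightarrow> int \<Rightarrow> bool" where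
  "poincare_ga G n \<longleftrightarrow> fin_dim_ga G \<and> (\<exists>\<alpha>. poincare_class G n \<alpha>)"

definition poincare_cdga :: "('k::field, 'a) cdga \<Rightarrow> int \<Rightarrow> bool" where
  "poincare_cdga A n \<longleftrightarrow> poincare_ga (cohom A) n"

text \<open>An element of degree k
  is a pair (x, y) standing for x + y theta, with x in A^k and y in A^(k-2n+1).
  (x1 + y1 theta)(x2 + y2 theta) = x1 x2 + (x1 y2 + (-1)^|x2| y1 x2) theta,
  d(x + y theta) = dx + (-1)^|y| y omega + (dy) theta.\<close>
definition A_theta :: "('k::field, 'a) cdga \<Rightarrow> nat \<Rightarrow> 'a \<Rightarrow> ('k, 'a \<times> 'a) cdga" where
  "A_theta A n \<omega> = (let t = 2 * int n - 1 in
     \<lparr> cmp = (\<lambda>k. cmp A k \<times> cmp A (k - t)),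
       zr = (\<lambda>k. (zr A k, zr A (k - t))),
       ad = (\<lambda>k p q. (ad A k (fst p) (fst q), ad A (k - t) (snd p) (snd q))),
       sc = (\<lambda>k c p. (sc A k c (fst p), sc A (k - t) c (snd p))),
       ml = (\<lambda>k l p q. (ml A k l (fst p) (fst q),
                         ad A (k + l - t) (ml A k (l - t) (fst p) (snd q))
                                          (sc A (k + l - t) (psign l) (ml A (k - t) l (snd p) (fst q))))),
       un = (un A, zr A (0 - t)),
       df = (\<lambda>k p. (ad A (k + 1) (df A k (fst p))
                               (sc A (k + 1) (psign (k - t)) (ml A (k - t) (2 * int n) (snd p) \<omega>)),
                     df A (k - t) (snd p))) \<rparr>)"

end

theory Submission
  imports Defs
begin

text \<open>
  Formality of A_theta forces all its triple Massey products to vanish: vanishing is preserved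
  by quasi-isomorphisms in both directions, and it holds trivially in a CDGA with zero
  differential such as H(A_theta).  Now suppose A had a nonzero x of odd degree p.  Poincare
  duality gives y with x y = omega, and graded commutativity gives y x = -omega; as
  d theta = omega, the pair (theta, -theta) is a defining system for the Massey product of
  x, y, x, with representative theta x - x theta = -2 x theta.  A cocycle of A_theta of
  degree 2n-1 has a theta-coefficient z in A^0 with z omega = 0, so z = 0 by duality; hence
  everything in the indeterminacy x H + H x has theta-coefficient 0.  This forces -2 x = 0,
  so x = 0 as 2 is invertible.
\<close>

section \<open>Homogeneous elements\<close>

lemma psign_add [simp]: "psign (i + j) = (psign i * psign j :: 'k::field)"
  and psign_diff [simp]: "psign (i - j) = (psign i * psign j :: 'k::field)"
  and psign_0 [simp]: "psign 0 = (1 :: 'k::field)"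
  and psign_1 [simp]: "psign 1 = (-1 :: 'k::field)"
  and psign_mult_self [simp]: "psign i * psign i = (1 :: 'k::field)"
  by (simp_all add: psign_def)

text \<open>A homogeneous element is encoded as a pair (degree, element), so that the degree-indexed
  operations of a CDGA become ordinary functions of their arguments.\<close>

definition homog :: "('k::field, 'a) cdga \<Rightarrow> int \<times> 'a \<Rightarrow> bool" where
  "homog A X \<longleftrightarrow> snd X \<in> cmp A (fst X)"

definition gzero :: "('k::field, 'a) cdga \<Rightarrow> int \<Rightarrow> int \<times> 'a" where
  "gzero A i = (i, zr A i)"

definition gadd :: "('k::field, 'a) cdga \<Rightarrow> int \<times> 'a \<Rightarrow> int \<times> 'a \<Rightarrow> int \<times> 'a" where
  "gadd A X Y = (fst X, ad A (fst X) (snd X) (snd Y))"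

definition gscale :: "('k::field, 'a) cdga \<Rightarrow> 'k \<Rightarrow> int \<times> 'a \<Rightarrow> int \<times> 'a" where
  "gscale A c X = (fst X, sc A (fst X) c (snd X))"

definition gsub :: "('k::field, 'a) cdga \<Rightarrow> int \<times> 'a \<Rightarrow> int \<times> 'a \<Rightarrow> int \<times> 'a" where
  "gsub A X Y = gadd A X (gscale A (-1) Y)"

definition gmul :: "('k::field, 'a) cdga \<Rightarrow> int \<times> 'a \<Rightarrow> int \<times> 'a \<Rightarrow> int \<times> 'a" where
  "gmul A X Y = (fst X + fst Y, ml A (fst X) (fst Y) (snd X) (snd Y))"

definition gdiff :: "('k::field, 'a) cdga \<Rightarrow> int \<times> 'a \<Rightarrow> int \<times> 'a" where
  "gdiff A X = (fst X + 1, df A (fst X) (snd X))"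

lemma fst_graded_ops [simp]:
  "fst (gzero A i) = i" "fst (gadd A X Y) = fst X" "fst (gscale A c X) = fst X"
  "fst (gsub A X Y) = fst X" "fst (gmul A X Y) = fst X + fst Y" "fst (gdiff A X) = fst X + 1"
  by (simp_all add: gzero_def gadd_def gscale_def gsub_def gmul_def gdiff_def)

lemma fst_eq_of_gdiff_eq: "gdiff A u = X \<Longrightarrow> fst u = fst X - 1"
  by (metis fst_graded_ops(6) add_diff_cancel_right')

definition cocycle :: "('k::field, 'a) cdga \<Rightarrow> int \<times> 'a \<Rightarrow> bool" where
  "cocycle A X \<longleftrightarrow> homog A X \<and> gdiff A X = gzero A (fst X + 1)"

definition coboundary :: "('k::field, 'a) cdga \<Rightarrow> int \<times> 'a \<Rightarrow> bool" where
  "coboundary A X \<longleftrightarrow> (\<exists>e. homog A e \<and> X = gdiff A e)"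

locale cdga_struct =
  fixes A :: "('k::field, 'a) cdga"
  assumes cdga: "is_cdga A"
begin

lemma vector_space: "vs_on (cmp A i) (zr A i) (ad A i) (sc A i)"
  using cdga by (simp add: is_cdga_def)

lemma zr_closed: "zr A i \<in> cmp A i"
  using vector_space[of i] unfolding vs_on_def by (elim conjE) meson
lemma ad_closed: "x \<in> cmp A i \<Longrightarrow> y \<in> cmp A i \<Longrightarrow> ad A i x y \<in> cmp A i"
  using vector_space[of i] unfolding vs_on_def by (elim conjE) meson
lemma sc_closed: "x \<in> cmp A i \<Longrightarrow> sc A i c x \<in> cmp A i"
  using vector_space[of i] unfolding vs_on_def by (elim conjE) meson
lemma ad_assoc: "x \<in> cmp A i \<Longrightarrow> y \<in> cmp A i \<Longrightarrow> w \<in> cmp A i \<Longrightarrow>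
    ad A i (ad A i x y) w = ad A i x (ad A i y w)"
  using vector_space[of i] unfolding vs_on_def by (elim conjE) meson
lemma ad_commute: "x \<in> cmp A i \<Longrightarrow> y \<in> cmp A i \<Longrightarrow> ad A i x y = ad A i y x"
  using vector_space[of i] unfolding vs_on_def by (elim conjE) meson
lemma ad_zr_left: "x \<in> cmp A i \<Longrightarrow> ad A i (zr A i) x = x"
  using vector_space[of i] unfolding vs_on_def by (elim conjE) meson
lemma ad_neg: "x \<in> cmp A i \<Longrightarrow> ad A i x (sc A i (-1) x) = zr A i"
  using vector_space[of i] unfolding vs_on_def by (elim conjE) meson
lemma sc_ad: "x \<in> cmp A i \<Longrightarrow> y \<in> cmp A i \<Longrightarrow> sc A i c (ad A i x y) = ad A i (sc A i c x) (sc A i c y)"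
  using vector_space[of i] unfolding vs_on_def by (elim conjE) meson
lemma sc_plus: "x \<in> cmp A i \<Longrightarrow> sc A i (c + d) x = ad A i (sc A i c x) (sc A i d x)"
  using vector_space[of i] unfolding vs_on_def by (elim conjE) meson
lemma sc_mult: "x \<in> cmp A i \<Longrightarrow> sc A i (c * d) x = sc A i c (sc A i d x)"
  using vector_space[of i] unfolding vs_on_def by (elim conjE) meson
lemma sc_one: "x \<in> cmp A i \<Longrightarrow> sc A i 1 x = x"
  using vector_space[of i] unfolding vs_on_def by (elim conjE) meson

lemma ml_closed: "x \<in> cmp A i \<Longrightarrow> y \<in> cmp A j \<Longrightarrow> ml A i j x y \<in> cmp A (i + j)"
  using cdga unfolding is_cdga_def by (elim conjE) meson
lemma ml_ad_left: "x \<in> cmp A i \<Longrightarrow> x' \<in> cmp A i \<Longrightarrow> y \<in> cmp A j \<Longrightarrow>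
    ml A i j (ad A i x x') y = ad A (i + j) (ml A i j x y) (ml A i j x' y)"
  using cdga unfolding is_cdga_def by (elim conjE) meson
lemma ml_ad_right: "x \<in> cmp A i \<Longrightarrow> y \<in> cmp A j \<Longrightarrow> y' \<in> cmp A j \<Longrightarrow>
    ml A i j x (ad A j y y') = ad A (i + j) (ml A i j x y) (ml A i j x y')"
  using cdga unfolding is_cdga_def by (elim conjE) meson
lemma ml_sc_left: "x \<in> cmp A i \<Longrightarrow> y \<in> cmp A j \<Longrightarrow>
    ml A i j (sc A i c x) y = sc A (i + j) c (ml A i j x y)"
  using cdga unfolding is_cdga_def by (elim conjE) meson
lemma ml_sc_right: "x \<in> cmp A i \<Longrightarrow> y \<in> cmp A j \<Longrightarrow>
    ml A i j x (sc A j c y) = sc A (i + j) c (ml A i j x y)"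
  using cdga unfolding is_cdga_def by (elim conjE) meson
lemma ml_assoc: "x \<in> cmp A i \<Longrightarrow> y \<in> cmp A j \<Longrightarrow> z \<in> cmp A k \<Longrightarrow>
    ml A (i + j) k (ml A i j x y) z = ml A i (j + k) x (ml A j k y z)"
  using cdga unfolding is_cdga_def by (elim conjE) meson
lemma un_closed: "un A \<in> cmp A 0"
  using cdga unfolding is_cdga_def by (elim conjE) meson
lemma ml_un_left: "x \<in> cmp A i \<Longrightarrow> ml A 0 i (un A) x = x"
  using cdga unfolding is_cdga_def by (elim conjE) meson
lemma ml_un_right: "x \<in> cmp A i \<Longrightarrow> ml A i 0 x (un A) = x"
  using cdga unfolding is_cdga_def by (elim conjE) meson
lemma ml_commute: "x \<in> cmp A i \<Longrightarrow> y \<in> cmp A j \<Longrightarrow>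
    ml A i j x y = sc A (i + j) (psign (i * j)) (ml A j i y x)"
  using cdga unfolding is_cdga_def by (elim conjE) meson
lemma df_closed: "x \<in> cmp A i \<Longrightarrow> df A i x \<in> cmp A (i + 1)"
  using cdga unfolding is_cdga_def by (elim conjE) meson
lemma df_ad: "x \<in> cmp A i \<Longrightarrow> y \<in> cmp A i \<Longrightarrow> df A i (ad A i x y) = ad A (i + 1) (df A i x) (df A i y)"
  using cdga unfolding is_cdga_def by (elim conjE) meson
lemma df_sc: "x \<in> cmp A i \<Longrightarrow> df A i (sc A i c x) = sc A (i + 1) c (df A i x)"
  using cdga unfolding is_cdga_def by (elim conjE) meson
lemma df_df: "x \<in> cmp A i \<Longrightarrow> df A (i + 1) (df A i x) = zr A (i + 2)"
  using cdga unfolding is_cdga_def by (elim conjE) meson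
lemma df_ml: "x \<in> cmp A i \<Longrightarrow> y \<in> cmp A j \<Longrightarrow> df A (i + j) (ml A i j x y)
    = ad A (i + j + 1) (ml A (i + 1) j (df A i x) y) (sc A (i + j + 1) (psign i) (ml A i (j + 1) x (df A j y)))"
  using cdga unfolding is_cdga_def by (elim conjE) meson

lemma ad_zr_right: "x \<in> cmp A i \<Longrightarrow> ad A i x (zr A i) = x"
  using ad_commute ad_zr_left zr_closed by metis

lemma ad_left_cancel:
  assumes "x \<in> cmp A i" "y \<in> cmp A i" "y' \<in> cmp A i" "ad A i x y = ad A i x y'"
  shows "y = y'"
proof -
  have neg: "sc A i (-1) x \<in> cmp A i" using assms sc_closed by blast
  have "y = ad A i (ad A i (sc A i (-1) x) x) y"
    using assms ad_neg ad_commute neg ad_zr_left by metis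
  also have "\<dots> = ad A i (ad A i (sc A i (-1) x) x) y'"
    using assms ad_assoc neg by metis
  also have "\<dots> = y'" using assms ad_neg ad_commute neg ad_zr_left by metis
  finally show ?thesis .
qed

lemma sc_zero: "x \<in> cmp A i \<Longrightarrow> sc A i 0 x = zr A i"
  using ad_left_cancel[OF sc_closed sc_closed zr_closed] sc_plus[of x i 0 0] ad_zr_right sc_closed
  by (metis add_0)

lemma sc_zr: "sc A i c (zr A i) = zr A i"
  using sc_mult[OF zr_closed, of i c 0] sc_zero[OF zr_closed] by simp

lemma ml_zr_left: "y \<in> cmp A j \<Longrightarrow> ml A i j (zr A i) y = zr A (i + j)"
  using ml_sc_left[OF zr_closed, of y j i 0] sc_zero zr_closed ml_closed by metis

lemma ml_zr_right: "x \<in> cmp A i \<Longrightarrow> ml A i j x (zr A j) = zr A (i + j)"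
  using ml_sc_right[OF _ zr_closed, of x i j 0] sc_zero zr_closed ml_closed by metis

lemma df_zr: "df A i (zr A i) = zr A (i + 1)"
  using df_sc[OF zr_closed, of i 0] sc_zero zr_closed df_closed by metis

lemma homog_gzero [simp]: "homog A (gzero A i)"
  by (simp add: homog_def gzero_def zr_closed)
lemma homog_gadd [simp]: "homog A X \<Longrightarrow> homog A Y \<Longrightarrow> fst Y = fst X \<Longrightarrow> homog A (gadd A X Y)"
  by (simp add: homog_def gadd_def ad_closed)
lemma homog_gscale [simp]: "homog A X \<Longrightarrow> homog A (gscale A c X)"
  by (simp add: homog_def gscale_def sc_closed)
lemma homog_gsub [simp]: "homog A X \<Longrightarrow> homog A Y \<Longrightarrow> fst Y = fst X \<Longrightarrow> homog A (gsub A X Y)"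
  by (simp add: gsub_def)
lemma homog_gmul [simp]: "homog A X \<Longrightarrow> homog A Y \<Longrightarrow> homog A (gmul A X Y)"
  by (simp add: homog_def gmul_def ml_closed)
lemma homog_gdiff [simp]: "homog A X \<Longrightarrow> homog A (gdiff A X)"
  by (simp add: homog_def gdiff_def df_closed)
lemma homog_unit: "homog A (0, un A)"
  by (simp add: homog_def un_closed)

lemma gadd_assoc: "homog A X \<Longrightarrow> homog A Y \<Longrightarrow> homog A W \<Longrightarrow> fst Y = fst X \<Longrightarrow> fst W = fst X \<Longrightarrow>
    gadd A (gadd A X Y) W = gadd A X (gadd A Y W)"
  by (simp add: homog_def gadd_def ad_assoc)
lemma gadd_commute: "homog A X \<Longrightarrow> homog A Y \<Longrightarrow> fst Y = fst X \<Longrightarrow> gadd A X Y = gadd A Y X"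
  by (simp add: homog_def gadd_def ad_commute)
lemma gadd_left_commute: "homog A X \<Longrightarrow> homog A Y \<Longrightarrow> homog A W \<Longrightarrow> fst Y = fst X \<Longrightarrow> fst W = fst X \<Longrightarrow>
    gadd A X (gadd A Y W) = gadd A Y (gadd A X W)"
  by (metis gadd_assoc gadd_commute fst_graded_ops(2))

lemmas gadd_ac = gadd_assoc gadd_commute gadd_left_commute

lemma gadd_gzero_left [simp]: "homog A X \<Longrightarrow> i = fst X \<Longrightarrow> gadd A (gzero A i) X = X"
  by (simp add: homog_def gadd_def gzero_def ad_zr_left)
lemma gadd_gzero_right [simp]: "homog A X \<Longrightarrow> i = fst X \<Longrightarrow> gadd A X (gzero A i) = X"
  by (simp add: homog_def gadd_def gzero_def ad_zr_right)
lemma gadd_neg: "homog A X \<Longrightarrow> gadd A X (gscale A (-1) X) = gzero A (fst X)"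
  by (simp add: homog_def gadd_def gzero_def gscale_def ad_neg)

lemma gscale_gadd [simp]: "homog A X \<Longrightarrow> homog A Y \<Longrightarrow> fst Y = fst X \<Longrightarrow>
    gscale A c (gadd A X Y) = gadd A (gscale A c X) (gscale A c Y)"
  by (simp add: homog_def gadd_def gscale_def sc_ad)
lemma gscale_gscale [simp]: "homog A X \<Longrightarrow> gscale A c (gscale A d X) = gscale A (c * d) X"
  by (simp add: homog_def gscale_def sc_mult)
lemma gscale_one [simp]: "homog A X \<Longrightarrow> gscale A 1 X = X"
  by (simp add: homog_def gscale_def sc_one)
lemma gscale_zero [simp]: "homog A X \<Longrightarrow> gscale A 0 X = gzero A (fst X)"
  by (simp add: homog_def gscale_def gzero_def sc_zero)
lemma gscale_gzero [simp]: "gscale A c (gzero A i) = gzero A i"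
  by (simp add: gscale_def gzero_def sc_zr)
lemma gadd_gscale_same: "homog A X \<Longrightarrow> gadd A (gscale A c X) (gscale A d X) = gscale A (c + d) X"
  by (simp add: homog_def gscale_def gadd_def sc_plus)

lemma gmul_gadd_left [simp]: "homog A X \<Longrightarrow> homog A X' \<Longrightarrow> homog A Y \<Longrightarrow> fst X' = fst X \<Longrightarrow>
    gmul A (gadd A X X') Y = gadd A (gmul A X Y) (gmul A X' Y)"
  by (simp add: homog_def gadd_def gmul_def ml_ad_left)
lemma gmul_gadd_right [simp]: "homog A X \<Longrightarrow> homog A Y \<Longrightarrow> homog A Y' \<Longrightarrow> fst Y' = fst Y \<Longrightarrow>
    gmul A X (gadd A Y Y') = gadd A (gmul A X Y) (gmul A X Y')"
  by (simp add: homog_def gadd_def gmul_def ml_ad_right)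
lemma gmul_gscale_left [simp]: "homog A X \<Longrightarrow> homog A Y \<Longrightarrow> gmul A (gscale A c X) Y = gscale A c (gmul A X Y)"
  by (simp add: homog_def gscale_def gmul_def ml_sc_left)
lemma gmul_gscale_right [simp]: "homog A X \<Longrightarrow> homog A Y \<Longrightarrow> gmul A X (gscale A c Y) = gscale A c (gmul A X Y)"
  by (simp add: homog_def gscale_def gmul_def ml_sc_right)
lemma gmul_assoc [simp]: "homog A X \<Longrightarrow> homog A Y \<Longrightarrow> homog A W \<Longrightarrow>
    gmul A (gmul A X Y) W = gmul A X (gmul A Y W)"
  by (simp add: homog_def gmul_def ml_assoc add.assoc)
lemma gmul_gzero_left [simp]: "homog A Y \<Longrightarrow> gmul A (gzero A i) Y = gzero A (i + fst Y)"
  by (simp add: homog_def gzero_def gmul_def ml_zr_left)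
lemma gmul_gzero_right [simp]: "homog A X \<Longrightarrow> gmul A X (gzero A j) = gzero A (fst X + j)"
  by (simp add: homog_def gzero_def gmul_def ml_zr_right)
lemma gmul_unit_left [simp]: "homog A X \<Longrightarrow> gmul A (0, un A) X = X"
  by (cases X) (simp add: gmul_def homog_def ml_un_left)
lemma gmul_unit_right [simp]: "homog A X \<Longrightarrow> gmul A X (0, un A) = X"
  by (cases X) (simp add: gmul_def homog_def ml_un_right)
lemma gmul_commute: "homog A X \<Longrightarrow> homog A Y \<Longrightarrow> gmul A X Y = gscale A (psign (fst X * fst Y)) (gmul A Y X)"
  by (simp add: homog_def gscale_def gmul_def ml_commute[of "snd X" "fst X" "snd Y" "fst Y"] add.commute)

lemma gdiff_gadd [simp]: "homog A X \<Longrightarrow> homog A Y \<Longrightarrow> fst Y = fst X \<Longrightarrow>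
    gdiff A (gadd A X Y) = gadd A (gdiff A X) (gdiff A Y)"
  by (simp add: homog_def gadd_def gdiff_def df_ad)
lemma gdiff_gscale [simp]: "homog A X \<Longrightarrow> gdiff A (gscale A c X) = gscale A c (gdiff A X)"
  by (simp add: homog_def gscale_def gdiff_def df_sc)
lemma gdiff_gdiff [simp]: "homog A X \<Longrightarrow> gdiff A (gdiff A X) = gzero A (fst X + 2)"
  by (simp add: homog_def gdiff_def gzero_def df_df add.assoc)
lemma gdiff_gzero [simp]: "gdiff A (gzero A i) = gzero A (i + 1)"
  by (simp add: gdiff_def gzero_def df_zr)
lemma gdiff_gmul: "homog A X \<Longrightarrow> homog A Y \<Longrightarrow>
    gdiff A (gmul A X Y) = gadd A (gmul A (gdiff A X) Y) (gscale A (psign (fst X)) (gmul A X (gdiff A Y)))"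
  using df_ml[of "snd X" "fst X" "snd Y" "fst Y"]
  by (simp add: homog_def gdiff_def gmul_def gadd_def gscale_def algebra_simps)

lemma gsub_gadd_cancel: "homog A X \<Longrightarrow> homog A Y \<Longrightarrow> fst Y = fst X \<Longrightarrow> gadd A (gsub A X Y) Y = X"
  using gadd_neg[of Y] by (simp add: gsub_def gadd_assoc gadd_commute[of Y])
lemma gadd_gsub_cancel: "homog A X \<Longrightarrow> homog A Y \<Longrightarrow> fst Y = fst X \<Longrightarrow> gsub A (gadd A X Y) Y = X"
  using gadd_neg[of Y] by (simp add: gsub_def gadd_assoc)
lemma gsub_gadd_gadd:
  assumes "homog A P" "homog A R" "homog A Q" "fst R = fst P" "fst Q = fst P"
  shows "gsub A (gadd A P R) (gadd A P Q) = gsub A R Q"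
proof -
  have "gsub A (gadd A P R) (gadd A P Q) = gadd A (gadd A P (gscale A (-1) P)) (gsub A R Q)"
    using assms by (simp add: gsub_def gadd_ac)
  then show ?thesis
    using assms by (simp add: gadd_neg)
qed

lemma cocycle_homog: "cocycle A X \<Longrightarrow> homog A X"
  by (simp add: cocycle_def)
lemma cocycle_gdiff_eq: "cocycle A X \<Longrightarrow> gdiff A X = gzero A (fst X + 1)"
  by (simp add: cocycle_def)

lemma cocycle_gzero [simp]: "cocycle A (gzero A i)"
  by (simp add: cocycle_def)
lemma cocycle_gadd: "cocycle A X \<Longrightarrow> cocycle A Y \<Longrightarrow> fst Y = fst X \<Longrightarrow> cocycle A (gadd A X Y)"
  by (simp add: cocycle_def)
lemma cocycle_gscale: "cocycle A X \<Longrightarrow> cocycle A (gscale A c X)"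
  by (simp add: cocycle_def)
lemma cocycle_gsub: "cocycle A X \<Longrightarrow> cocycle A Y \<Longrightarrow> fst Y = fst X \<Longrightarrow> cocycle A (gsub A X Y)"
  by (simp add: gsub_def cocycle_gadd cocycle_gscale)
lemma cocycle_gmul: "cocycle A X \<Longrightarrow> cocycle A Y \<Longrightarrow> cocycle A (gmul A X Y)"
  by (simp add: cocycle_def gdiff_gmul add_ac)
lemma cocycle_gdiff [simp]: "homog A e \<Longrightarrow> cocycle A (gdiff A e)"
  by (simp add: cocycle_def add.assoc)
lemma cocycle_gadd_gdiff: "cocycle A X \<Longrightarrow> homog A e \<Longrightarrow> fst e = fst X - 1 \<Longrightarrow> cocycle A (gadd A X (gdiff A e))"
  by (simp add: cocycle_gadd)

lemma coboundary_gdiff [simp]: "homog A e \<Longrightarrow> coboundary A (gdiff A e)"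
  unfolding coboundary_def by blast
lemma coboundary_gadd:
  assumes "coboundary A X" "coboundary A Y" "fst Y = fst X"
  shows "coboundary A (gadd A X Y)"
proof -
  obtain e e' where e: "homog A e" "X = gdiff A e" "homog A e'" "Y = gdiff A e'"
    using assms(1,2) coboundary_def by metis
  moreover have "fst e' = fst e" using e assms(3) by simp
  ultimately have "gadd A X Y = gdiff A (gadd A e e')" by simp
  then show ?thesis using e \<open>fst e' = fst e\<close> by (metis coboundary_gdiff homog_gadd)
qed
lemma coboundary_gscale: "coboundary A X \<Longrightarrow> coboundary A (gscale A c X)"
  unfolding coboundary_def by (metis gdiff_gscale homog_gscale)
lemma coboundary_gsub: "coboundary A X \<Longrightarrow> coboundary A Y \<Longrightarrow> fst Y = fst X \<Longrightarrow> coboundary A (gsub A X Y)"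
  by (simp add: gsub_def coboundary_gadd coboundary_gscale)

lemma gmul_cocycle_gdiff: "cocycle A a \<Longrightarrow> homog A e \<Longrightarrow>
    gmul A a (gdiff A e) = gdiff A (gscale A (psign (fst a)) (gmul A a e))"
  by (simp add: cocycle_def gdiff_gmul)
lemma gmul_gdiff_cocycle: "cocycle A c \<Longrightarrow> homog A e \<Longrightarrow> gmul A (gdiff A e) c = gdiff A (gmul A e c)"
  by (simp add: cocycle_def gdiff_gmul)
lemma coboundary_gmul_left: "cocycle A a \<Longrightarrow> coboundary A X \<Longrightarrow> coboundary A (gmul A a X)"
  unfolding coboundary_def by (metis gmul_cocycle_gdiff cocycle_homog homog_gmul homog_gscale)
lemma coboundary_gmul_right: "cocycle A c \<Longrightarrow> coboundary A X \<Longrightarrow> coboundary A (gmul A X c)"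
  unfolding coboundary_def by (metis gmul_gdiff_cocycle cocycle_homog homog_gmul)

end

section \<open>Triple Massey products\<close>

text \<open>massey_product_vanishes A a b c says that the Massey product of the classes of a, b, c
  contains zero, i.e. that all its representatives lie in the indeterminacy a H + H c.\<close>

definition defining_system :: "('k::field, 'a) cdga \<Rightarrow> int \<times> 'a \<Rightarrow> int \<times> 'a \<Rightarrow> int \<times> 'a
    \<Rightarrow> int \<times> 'a \<Rightarrow> int \<times> 'a \<Rightarrow> bool" where
  "defining_system A a b c u v \<longleftrightarrow>
     homog A u \<and> homog A v \<and> gdiff A u = gmul A a b \<and> gdiff A v = gmul A b c"

definition massey_rep :: "('k::field, 'a) cdga \<Rightarrow> int \<times> 'a \<Rightarrow> int \<times> 'a
    \<Rightarrow> int \<times> 'a \<Rightarrow> int \<times> 'a \<Rightarrow> int \<times> 'a" where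
  "massey_rep A a c u v = gadd A (gmul A u c) (gscale A (- psign (fst a)) (gmul A a v))"

definition in_indeterminacy :: "('k::field, 'a) cdga \<Rightarrow> int \<times> 'a \<Rightarrow> int \<times> 'a \<Rightarrow> int \<times> 'a \<Rightarrow> bool" where
  "in_indeterminacy A a c X \<longleftrightarrow> homog A X \<and>
     (\<exists>z w e. cocycle A z \<and> cocycle A w \<and> homog A e
        \<and> fst a + fst z = fst X \<and> fst w + fst c = fst X \<and> fst e + 1 = fst X
        \<and> X = gadd A (gadd A (gmul A a z) (gmul A w c)) (gdiff A e))"

definition massey_product_vanishes :: "('k::field, 'a) cdga \<Rightarrow> int \<times> 'a \<Rightarrow> int \<times> 'a \<Rightarrow> int \<times> 'a \<Rightarrow> bool" where
  "massey_product_vanishes A a b c \<longleftrightarrow>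
     (\<forall>u v. defining_system A a b c u v \<longrightarrow> in_indeterminacy A a c (massey_rep A a c u v))"

definition all_massey_products_vanish :: "('k::field, 'a) cdga \<Rightarrow> bool" where
  "all_massey_products_vanish A \<longleftrightarrow>
     (\<forall>a b c. cocycle A a \<longrightarrow> cocycle A b \<longrightarrow> cocycle A c \<longrightarrow> massey_product_vanishes A a b c)"

lemma defining_system_degrees:
  "defining_system A a b c u v \<Longrightarrow> fst u = fst a + fst b - 1 \<and> fst v = fst b + fst c - 1"
  unfolding defining_system_def by (metis fst_eq_of_gdiff_eq fst_graded_ops(5))

lemma fst_massey_rep [simp]: "fst (massey_rep A a c u v) = fst u + fst c"
  by (simp add: massey_rep_def)

lemma in_indeterminacyE:
  assumes "in_indeterminacy A a c X"
  obtains z w e where "cocycle A z" "cocycle A w" "homog A e"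
    "fst a + fst z = fst X" "fst w + fst c = fst X" "fst e + 1 = fst X"
    "X = gadd A (gadd A (gmul A a z) (gmul A w c)) (gdiff A e)"
  using assms unfolding in_indeterminacy_def by blast

context cdga_struct
begin

lemma in_indeterminacyI:
  assumes "homog A a" "homog A c" "cocycle A z" "cocycle A w" "homog A e"
    "fst w + fst c = fst a + fst z" "fst e + 1 = fst a + fst z"
  shows "in_indeterminacy A a c (gadd A (gadd A (gmul A a z) (gmul A w c)) (gdiff A e))"
  using assms cocycle_homog unfolding in_indeterminacy_def by (intro conjI exI) auto

lemma in_indeterminacy_gadd:
  assumes a: "homog A a" and c: "homog A c"
    and X: "in_indeterminacy A a c X" and Y: "in_indeterminacy A a c Y" and deg: "fst Y = fst X"
  shows "in_indeterminacy A a c (gadd A X Y)"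
proof -
  obtain z w e where zwe: "cocycle A z" "cocycle A w" "homog A e" "fst a + fst z = fst X"
      "fst w + fst c = fst X" "fst e + 1 = fst X" "X = gadd A (gadd A (gmul A a z) (gmul A w c)) (gdiff A e)"
    using X by (rule in_indeterminacyE)
  obtain z' w' e' where zwe': "cocycle A z'" "cocycle A w'" "homog A e'" "fst a + fst z' = fst Y"
      "fst w' + fst c = fst Y" "fst e' + 1 = fst Y" "Y = gadd A (gadd A (gmul A a z') (gmul A w' c)) (gdiff A e')"
    using Y by (rule in_indeterminacyE)
  have h: "homog A z" "homog A w" "homog A z'" "homog A w'"
    using zwe zwe' cocycle_homog by auto
  have deg': "fst z' = fst z" "fst w' = fst w" "fst e' = fst e"
    using zwe zwe' deg by linarith+
  have "gadd A X Y = gadd A (gadd A (gadd A (gmul A a z) (gmul A w c)) (gdiff A e))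
      (gadd A (gadd A (gmul A a z') (gmul A w' c)) (gdiff A e'))"
    using zwe(7) zwe'(7) by simp
  also have "\<dots> = gadd A (gadd A (gmul A a (gadd A z z')) (gmul A (gadd A w w') c)) (gdiff A (gadd A e e'))"
    using a c h zwe(3) zwe'(3) deg' zwe(4-6) by (simp add: gadd_ac)
  finally have "gadd A X Y = \<dots>" .
  moreover have "in_indeterminacy A a c \<dots>"
    using zwe zwe' deg' by (intro in_indeterminacyI a c cocycle_gadd homog_gadd) auto
  ultimately show ?thesis by simp
qed

lemma in_indeterminacy_gscale:
  assumes a: "homog A a" and c: "homog A c" and X: "in_indeterminacy A a c X"
  shows "in_indeterminacy A a c (gscale A k X)"
proof -
  obtain z w e where zwe: "cocycle A z" "cocycle A w" "homog A e" "fst a + fst z = fst X"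
      "fst w + fst c = fst X" "fst e + 1 = fst X" "X = gadd A (gadd A (gmul A a z) (gmul A w c)) (gdiff A e)"
    using X by (rule in_indeterminacyE)
  then have "gscale A k X
      = gadd A (gadd A (gmul A a (gscale A k z)) (gmul A (gscale A k w) c)) (gdiff A (gscale A k e))"
    using a c cocycle_homog by simp
  moreover have "in_indeterminacy A a c
      (gadd A (gadd A (gmul A a (gscale A k z)) (gmul A (gscale A k w) c)) (gdiff A (gscale A k e)))"
    using zwe by (intro in_indeterminacyI a c cocycle_gscale homog_gscale) auto
  ultimately show ?thesis by simp
qed

lemma in_indeterminacy_gsub:
  "homog A a \<Longrightarrow> homog A c \<Longrightarrow> in_indeterminacy A a c X \<Longrightarrow> in_indeterminacy A a c Y \<Longrightarrow>
    fst Y = fst X \<Longrightarrow> in_indeterminacy A a c (gsub A X Y)"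
  unfolding gsub_def by (simp add: in_indeterminacy_gadd in_indeterminacy_gscale)

lemma gmul_left_in_indeterminacy:
  assumes "homog A a" "homog A c" "cocycle A z"
  shows "in_indeterminacy A a c (gmul A a z)"
proof -
  let ?w = "gzero A (fst a + fst z - fst c)" and ?e = "gzero A (fst a + fst z - 1)"
  have "in_indeterminacy A a c (gadd A (gadd A (gmul A a z) (gmul A ?w c)) (gdiff A ?e))"
    using assms by (intro in_indeterminacyI) auto
  then show ?thesis
    using assms cocycle_homog by simp
qed

lemma gmul_right_in_indeterminacy:
  assumes "homog A a" "homog A c" "cocycle A w"
  shows "in_indeterminacy A a c (gmul A w c)"
proof -
  let ?z = "gzero A (fst w + fst c - fst a)" and ?e = "gzero A (fst w + fst c - 1)"
  have "in_indeterminacy A a c (gadd A (gadd A (gmul A a ?z) (gmul A w c)) (gdiff A ?e))"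
    using assms by (intro in_indeterminacyI) auto
  then show ?thesis
    using assms cocycle_homog by simp
qed

lemma coboundary_in_indeterminacy:
  assumes "homog A a" "homog A c" "coboundary A X"
  shows "in_indeterminacy A a c X"
proof -
  obtain e where e: "homog A e" "X = gdiff A e"
    using assms(3) coboundary_def by blast
  let ?z = "gzero A (fst X - fst a)" and ?w = "gzero A (fst X - fst c)"
  have "in_indeterminacy A a c (gadd A (gadd A (gmul A a ?z) (gmul A ?w c)) (gdiff A e))"
    using assms e by (intro in_indeterminacyI) auto
  then show ?thesis
    using assms e by simp
qed

lemma in_indeterminacy_gadd_gdiff_cancel:
  assumes "in_indeterminacy A a c (gadd A X (gdiff A E))"
    and "homog A a" "homog A c" "homog A X" "homog A E" "fst E + 1 = fst X"
  shows "in_indeterminacy A a c X"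
proof -
  have "X = gsub A (gadd A X (gdiff A E)) (gdiff A E)"
    using assms by (simp add: gadd_gsub_cancel)
  then show ?thesis
    using assms in_indeterminacy_gsub coboundary_in_indeterminacy coboundary_gdiff by (metis fst_graded_ops)
qed

lemma in_indeterminacy_change_left:
  assumes a: "homog A a" and c: "homog A c" and \<alpha>: "homog A \<alpha>" "fst \<alpha> = fst a - 1"
    and X: "in_indeterminacy A (gadd A a (gdiff A \<alpha>)) c X"
  shows "in_indeterminacy A a c X"
proof -
  obtain z w e where zwe: "cocycle A z" "cocycle A w" "homog A e" "fst a + fst z = fst X"
      "fst w + fst c = fst X" "fst e + 1 = fst X"
      "X = gadd A (gadd A (gmul A (gadd A a (gdiff A \<alpha>)) z) (gmul A w c)) (gdiff A e)"
    using X by (auto elim: in_indeterminacyE)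
  have h: "homog A z" "homog A w" "homog A (gmul A \<alpha> z)" "fst e = fst \<alpha> + fst z"
    using zwe \<alpha> cocycle_homog by auto
  have "X = gadd A (gadd A (gadd A (gmul A a z) (gdiff A (gmul A \<alpha> z))) (gmul A w c)) (gdiff A e)"
    using zwe(7) a \<alpha> h gmul_gdiff_cocycle[OF zwe(1) \<alpha>(1)] by simp
  also have "\<dots> = gadd A (gadd A (gmul A a z) (gmul A w c)) (gadd A (gdiff A (gmul A \<alpha> z)) (gdiff A e))"
    using a c h zwe(3,4,5) \<alpha>(2) by (simp add: gadd_ac)
  also have "\<dots> = gadd A (gadd A (gmul A a z) (gmul A w c)) (gdiff A (gadd A (gmul A \<alpha> z) e))"
    using h zwe(3) by simp
  finally have "X = \<dots>" .
  moreover have "in_indeterminacy A a c \<dots>"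
    using \<alpha> zwe h by (intro in_indeterminacyI a c) auto
  ultimately show ?thesis by simp
qed

lemma in_indeterminacy_change_right:
  assumes a: "homog A a" and c: "homog A c" and \<gamma>: "homog A \<gamma>" "fst \<gamma> = fst c - 1"
    and X: "in_indeterminacy A a (gadd A c (gdiff A \<gamma>)) X"
  shows "in_indeterminacy A a c X"
proof -
  obtain z w e where zwe: "cocycle A z" "cocycle A w" "homog A e" "fst a + fst z = fst X"
      "fst w + fst c = fst X" "fst e + 1 = fst X"
      "X = gadd A (gadd A (gmul A a z) (gmul A w (gadd A c (gdiff A \<gamma>)))) (gdiff A e)"
    using X by (auto elim: in_indeterminacyE)
  let ?E = "gscale A (psign (fst w)) (gmul A w \<gamma>)"
  have h: "homog A z" "homog A w" "homog A ?E" "fst e = fst w + fst \<gamma>"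
    using zwe \<gamma> cocycle_homog by auto
  have "X = gadd A (gadd A (gmul A a z) (gadd A (gmul A w c) (gdiff A ?E))) (gdiff A e)"
    using zwe(7) c \<gamma> h gmul_cocycle_gdiff[OF zwe(2) \<gamma>(1)] by simp
  also have "\<dots> = gadd A (gadd A (gmul A a z) (gmul A w c)) (gadd A (gdiff A ?E) (gdiff A e))"
    using a c h zwe(3,4,5) \<gamma>(2) by (simp add: gadd_ac)
  also have "\<dots> = gadd A (gadd A (gmul A a z) (gmul A w c)) (gdiff A (gadd A ?E e))"
    using h zwe(3) by simp
  finally have "X = \<dots>" .
  moreover have "in_indeterminacy A a c \<dots>"
    using \<gamma> zwe h by (intro in_indeterminacyI a c) auto
  ultimately show ?thesis by simp
qed

lemma massey_rep_cocycle:
  assumes "cocycle A a" "cocycle A b" "cocycle A c" "defining_system A a b c u v"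
  shows "cocycle A (massey_rep A a c u v)"
proof -
  have "homog A u" "homog A v" "gdiff A u = gmul A a b" "gdiff A v = gmul A b c"
    "fst u = fst a + fst b - 1" "fst v = fst b + fst c - 1"
    using assms(4) defining_system_degrees unfolding defining_system_def by blast+
  then show ?thesis
    using assms(1-3) cocycle_homog unfolding cocycle_def massey_rep_def
    by (simp add: gdiff_gmul cocycle_gdiff_eq gadd_neg)
qed

lemma massey_rep_gadd:
  assumes "homog A a" "homog A c" "homog A u" "homog A v" "homog A u0" "homog A v0"
    "fst u0 = fst u" "fst v0 = fst v" "fst u + fst c = fst a + fst v"
  shows "massey_rep A a c (gadd A u u0) (gadd A v v0)
    = gadd A (massey_rep A a c u v) (gadd A (gmul A u0 c) (gscale A (- psign (fst a)) (gmul A a v0)))"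
  using assms unfolding massey_rep_def by (simp add: gadd_ac)

text \<open>Two defining systems differ by cocycles, which change the representative by an element
  of a H + H c.\<close>

lemma massey_product_vanishesI:
  assumes a: "homog A a" and c: "homog A c" and ds: "defining_system A a b c u v"
    and X: "in_indeterminacy A a c (massey_rep A a c u v)"
  shows "massey_product_vanishes A a b c"
  unfolding massey_product_vanishes_def
proof (intro allI impI)
  fix u' v' assume ds': "defining_system A a b c u' v'"
  have h: "homog A u" "homog A v" "homog A u'" "homog A v'"
    using ds ds' unfolding defining_system_def by blast+
  have deg: "fst u' = fst u" "fst v' = fst v" "fst u = fst a + fst b - 1" "fst v = fst b + fst c - 1"
    using defining_system_degrees[OF ds] defining_system_degrees[OF ds'] by auto
  let ?u0 = "gsub A u' u" and ?v0 = "gsub A v' v"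
  have "gdiff A u' = gdiff A u" "gdiff A v' = gdiff A v"
    using ds ds' unfolding defining_system_def by simp_all
  then have cyc: "cocycle A ?u0" "cocycle A ?v0"
    using h deg unfolding cocycle_def by (simp_all add: gsub_def gadd_neg)
  have "u' = gadd A u ?u0" "v' = gadd A v ?v0"
    using h deg by (simp_all add: gsub_gadd_cancel gadd_commute[of u] gadd_commute[of v])
  then have "massey_rep A a c u' v'
      = gadd A (massey_rep A a c u v) (gadd A (gmul A ?u0 c) (gscale A (- psign (fst a)) (gmul A a ?v0)))"
    using massey_rep_gadd[of a c u v ?u0 ?v0] a c h deg by simp
  moreover have "in_indeterminacy A a c (gadd A (gmul A ?u0 c) (gscale A (- psign (fst a)) (gmul A a ?v0)))"
    using a c cyc deg
    by (intro in_indeterminacy_gadd in_indeterminacy_gscale gmul_left_in_indeterminacy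
        gmul_right_in_indeterminacy) auto
  ultimately show "in_indeterminacy A a c (massey_rep A a c u' v')"
    using in_indeterminacy_gadd[OF a c X] deg by simp
qed

lemma defining_system_change_left:
  assumes "homog A a" "cocycle A b" "defining_system A a b c u v" "homog A \<alpha>" "fst \<alpha> = fst a - 1"
  shows "defining_system A (gadd A a (gdiff A \<alpha>)) b c (gadd A u (gmul A \<alpha> b)) v"
  using assms defining_system_degrees[OF assms(3)] cocycle_homog unfolding defining_system_def
  by (simp add: gdiff_gmul cocycle_gdiff_eq)

lemma massey_rep_change_left:
  assumes "cocycle A b" "homog A a" "homog A c" "defining_system A a b c u v" "homog A \<alpha>" "fst \<alpha> = fst a - 1"
  shows "massey_rep A (gadd A a (gdiff A \<alpha>)) c (gadd A u (gmul A \<alpha> b)) v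
    = gadd A (massey_rep A a c u v) (gdiff A (gscale A (- psign (fst a)) (gmul A \<alpha> v)))"
  using assms defining_system_degrees[OF assms(4)] cocycle_homog unfolding defining_system_def massey_rep_def
  by (simp add: gdiff_gmul gadd_ac)

lemma defining_system_change_middle:
  assumes "cocycle A a" "homog A b" "cocycle A c" "defining_system A a b c u v" "homog A \<beta>" "fst \<beta> = fst b - 1"
  shows "defining_system A a (gadd A b (gdiff A \<beta>)) c
    (gadd A u (gscale A (psign (fst a)) (gmul A a \<beta>))) (gadd A v (gmul A \<beta> c))"
  using assms defining_system_degrees[OF assms(4)] cocycle_homog unfolding defining_system_def
  by (simp add: gdiff_gmul cocycle_gdiff_eq)

lemma massey_rep_change_middle:
  assumes "homog A a" "homog A c" "defining_system A a b c u v" "homog A \<beta>" "fst \<beta> = fst b - 1"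
  shows "massey_rep A a c (gadd A u (gscale A (psign (fst a)) (gmul A a \<beta>))) (gadd A v (gmul A \<beta> c))
    = massey_rep A a c u v"
proof -
  let ?M = "gmul A a (gmul A \<beta> c)"
  have h: "homog A u" "homog A v" "fst u = fst a + fst b - 1" "fst v = fst b + fst c - 1"
    using assms(3) defining_system_degrees unfolding defining_system_def by blast+
  then have "massey_rep A a c (gadd A u (gscale A (psign (fst a)) (gmul A a \<beta>))) (gadd A v (gmul A \<beta> c))
      = gadd A (massey_rep A a c u v) (gadd A (gscale A (psign (fst a)) ?M) (gscale A (- psign (fst a)) ?M))"
    using assms unfolding massey_rep_def by (simp add: gadd_ac)
  also have "gadd A (gscale A (psign (fst a)) ?M) (gscale A (- psign (fst a)) ?M) = gzero A (fst ?M)"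
    using assms by (simp add: gadd_gscale_same)
  finally show ?thesis
    using assms h unfolding massey_rep_def by simp
qed

lemma defining_system_change_right:
  assumes "cocycle A b" "homog A c" "defining_system A a b c u v" "homog A \<gamma>" "fst \<gamma> = fst c - 1"
  shows "defining_system A a b (gadd A c (gdiff A \<gamma>)) u (gadd A v (gscale A (psign (fst b)) (gmul A b \<gamma>)))"
  using assms defining_system_degrees[OF assms(3)] cocycle_homog unfolding defining_system_def
  by (simp add: gdiff_gmul cocycle_gdiff_eq)

lemma massey_rep_change_right:
  assumes "homog A a" "homog A b" "homog A c" "defining_system A a b c u v" "homog A \<gamma>" "fst \<gamma> = fst c - 1"
  shows "massey_rep A a (gadd A c (gdiff A \<gamma>)) u (gadd A v (gscale A (psign (fst b)) (gmul A b \<gamma>)))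
    = gadd A (massey_rep A a c u v) (gdiff A (gscale A (- (psign (fst a) * psign (fst b))) (gmul A u \<gamma>)))"
  using assms defining_system_degrees[OF assms(4)] unfolding defining_system_def massey_rep_def
  by (simp add: gdiff_gmul gadd_ac mult_ac)

lemma homog_massey_rep:
  "homog A a \<Longrightarrow> homog A c \<Longrightarrow> homog A u \<Longrightarrow> homog A v \<Longrightarrow> fst u + fst c = fst a + fst v \<Longrightarrow>
    homog A (massey_rep A a c u v)"
  unfolding massey_rep_def by simp

lemma massey_product_vanishes_change_left:
  assumes a: "homog A a" and b: "cocycle A b" and c: "homog A c"
    and \<alpha>: "homog A \<alpha>" "fst \<alpha> = fst a - 1"
    and vanishes: "massey_product_vanishes A (gadd A a (gdiff A \<alpha>)) b c"
  shows "massey_product_vanishes A a b c"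
  unfolding massey_product_vanishes_def
proof (intro allI impI)
  fix u v assume ds: "defining_system A a b c u v"
  let ?a' = "gadd A a (gdiff A \<alpha>)" and ?E = "gscale A (- psign (fst a)) (gmul A \<alpha> v)"
  have h: "homog A u" "homog A v" "fst u = fst a + fst b - 1" "fst v = fst b + fst c - 1"
    using ds defining_system_degrees unfolding defining_system_def by blast+
  have "in_indeterminacy A ?a' c (massey_rep A ?a' c (gadd A u (gmul A \<alpha> b)) v)"
    using vanishes defining_system_change_left[OF a b ds \<alpha>] unfolding massey_product_vanishes_def by blast
  then have "in_indeterminacy A ?a' c (gadd A (massey_rep A a c u v) (gdiff A ?E))"
    using massey_rep_change_left[OF b a c ds \<alpha>] by simp
  then have "in_indeterminacy A ?a' c (massey_rep A a c u v)"
    by (rule in_indeterminacy_gadd_gdiff_cancel) (use a c \<alpha> h in \<open>auto intro: homog_massey_rep\<close>)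
  then show "in_indeterminacy A a c (massey_rep A a c u v)"
    by (rule in_indeterminacy_change_left[OF a c \<alpha>])
qed

lemma massey_product_vanishes_change_middle:
  assumes a: "cocycle A a" and b: "homog A b" and c: "cocycle A c"
    and \<beta>: "homog A \<beta>" "fst \<beta> = fst b - 1"
    and vanishes: "massey_product_vanishes A a (gadd A b (gdiff A \<beta>)) c"
  shows "massey_product_vanishes A a b c"
  unfolding massey_product_vanishes_def
proof (intro allI impI)
  fix u v assume ds: "defining_system A a b c u v"
  show "in_indeterminacy A a c (massey_rep A a c u v)"
    using vanishes defining_system_change_middle[OF a b c ds \<beta>]
      massey_rep_change_middle[OF cocycle_homog[OF a] cocycle_homog[OF c] ds \<beta>]
    unfolding massey_product_vanishes_def by metis
qed

lemma massey_product_vanishes_change_right: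
  assumes a: "homog A a" and b: "cocycle A b" and c: "homog A c"
    and \<gamma>: "homog A \<gamma>" "fst \<gamma> = fst c - 1"
    and vanishes: "massey_product_vanishes A a b (gadd A c (gdiff A \<gamma>))"
  shows "massey_product_vanishes A a b c"
  unfolding massey_product_vanishes_def
proof (intro allI impI)
  fix u v assume ds: "defining_system A a b c u v"
  let ?c' = "gadd A c (gdiff A \<gamma>)" and ?E = "gscale A (- (psign (fst a) * psign (fst b))) (gmul A u \<gamma>)"
  have h: "homog A u" "homog A v" "fst u = fst a + fst b - 1" "fst v = fst b + fst c - 1"
    using ds defining_system_degrees unfolding defining_system_def by blast+
  have "in_indeterminacy A a ?c' (massey_rep A a ?c' u (gadd A v (gscale A (psign (fst b)) (gmul A b \<gamma>))))"
    using vanishes defining_system_change_right[OF b c ds \<gamma>] unfolding massey_product_vanishes_def by blast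
  then have "in_indeterminacy A a ?c' (gadd A (massey_rep A a c u v) (gdiff A ?E))"
    using massey_rep_change_right[OF a cocycle_homog[OF b] c ds \<gamma>] by simp
  then have "in_indeterminacy A a ?c' (massey_rep A a c u v)"
    by (rule in_indeterminacy_gadd_gdiff_cancel) (use a c \<gamma> h in \<open>auto intro: homog_massey_rep\<close>)
  then show "in_indeterminacy A a c (massey_rep A a c u v)"
    by (rule in_indeterminacy_change_right[OF a c \<gamma>])
qed

lemma massey_product_vanishes_cohomologous:
  assumes a: "cocycle A a" and b: "cocycle A b" and c: "cocycle A c"
    and \<alpha>: "homog A \<alpha>" "fst \<alpha> = fst a - 1" and \<beta>: "homog A \<beta>" "fst \<beta> = fst b - 1"
    and \<gamma>: "homog A \<gamma>" "fst \<gamma> = fst c - 1"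
    and vanishes: "massey_product_vanishes A (gadd A a (gdiff A \<alpha>)) (gadd A b (gdiff A \<beta>)) (gadd A c (gdiff A \<gamma>))"
  shows "massey_product_vanishes A a b c"
proof -
  have a': "cocycle A (gadd A a (gdiff A \<alpha>))" and b': "cocycle A (gadd A b (gdiff A \<beta>))"
    using a b \<alpha> \<beta> by (simp_all add: cocycle_gadd_gdiff)
  have "massey_product_vanishes A (gadd A a (gdiff A \<alpha>)) (gadd A b (gdiff A \<beta>)) c"
    using massey_product_vanishes_change_right[OF cocycle_homog[OF a'] b' cocycle_homog[OF c] \<gamma> vanishes] .
  then have "massey_product_vanishes A (gadd A a (gdiff A \<alpha>)) b c"
    using massey_product_vanishes_change_middle[OF a' cocycle_homog[OF b] c \<beta>] by blast
  then show ?thesis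
    using massey_product_vanishes_change_left[OF cocycle_homog[OF a] b cocycle_homog[OF c] \<alpha>] by blast
qed

lemma defining_system_cohomologous:
  assumes a: "cocycle A a" and b: "cocycle A b" and c: "cocycle A c"
    and \<alpha>: "homog A \<alpha>" "fst \<alpha> = fst a - 1" and \<beta>: "homog A \<beta>" "fst \<beta> = fst b - 1"
    and \<gamma>: "homog A \<gamma>" "fst \<gamma> = fst c - 1"
    and ds: "defining_system A a b c u v"
  obtains u' v' where
    "defining_system A (gadd A a (gdiff A \<alpha>)) (gadd A b (gdiff A \<beta>)) (gadd A c (gdiff A \<gamma>)) u' v'"
proof -
  have a': "cocycle A (gadd A a (gdiff A \<alpha>))" and b': "cocycle A (gadd A b (gdiff A \<beta>))"
    using a b \<alpha> \<beta> by (simp_all add: cocycle_gadd_gdiff)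
  note ds1 = defining_system_change_left[OF cocycle_homog[OF a] b ds \<alpha>]
  note ds2 = defining_system_change_middle[OF a' cocycle_homog[OF b] c ds1 \<beta>]
  note ds3 = defining_system_change_right[OF b' cocycle_homog[OF c] ds2 \<gamma>]
  show ?thesis using that ds3 by blast
qed

end

section \<open>Formality and Massey products\<close>

lemma (in cdga_struct) all_massey_products_vanish_if_zero_diff:
  assumes zero: "\<And>X. homog A X \<Longrightarrow> gdiff A X = gzero A (fst X + 1)"
  shows "all_massey_products_vanish A"
  unfolding all_massey_products_vanish_def massey_product_vanishes_def
proof (intro allI impI)
  fix a b c u v
  assume a: "cocycle A a" and c: "cocycle A c" and ds: "defining_system A a b c u v"
  have "homog A u" "homog A v"
    using ds unfolding defining_system_def by auto
  then have u: "cocycle A u" and v: "cocycle A v"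
    using zero by (simp_all add: cocycle_def)
  have "fst u + fst c = fst a + fst v"
    using defining_system_degrees[OF ds] by simp
  then show "in_indeterminacy A a c (massey_rep A a c u v)"
    unfolding massey_rep_def using a c u v cocycle_homog
    by (intro in_indeterminacy_gadd in_indeterminacy_gscale gmul_left_in_indeterminacy
        gmul_right_in_indeterminacy) auto
qed

definition gmap :: "(int \<Rightarrow> 'a \<Rightarrow> 'b) \<Rightarrow> int \<times> 'a \<Rightarrow> int \<times> 'b" where
  "gmap f X = (fst X, f (fst X) (snd X))"

lemma fst_gmap [simp]: "fst (gmap f X) = fst X"
  by (simp add: gmap_def)

locale cdga_quasi_iso =
  fixes B :: "('k::field, 'a) cdga" and C :: "('k, 'b) cdga" and f :: "int \<Rightarrow> 'a \<Rightarrow> 'b"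
  assumes quasi_iso: "quasi_iso B C f"
begin

sublocale B: cdga_struct B
  using quasi_iso unfolding quasi_iso_def cdga_struct_def by blast
sublocale C: cdga_struct C
  using quasi_iso unfolding quasi_iso_def cdga_struct_def by blast

lemma hom: "cdga_hom B C f"
  using quasi_iso unfolding quasi_iso_def by blast

lemma homog_gmap [simp]: "homog B X \<Longrightarrow> homog C (gmap f X)"
  using hom unfolding cdga_hom_def homog_def gmap_def by auto
lemma gmap_gadd [simp]: "homog B X \<Longrightarrow> homog B Y \<Longrightarrow> fst Y = fst X \<Longrightarrow>
    gmap f (gadd B X Y) = gadd C (gmap f X) (gmap f Y)"
  using hom unfolding cdga_hom_def homog_def gmap_def gadd_def by auto
lemma gmap_gscale [simp]: "homog B X \<Longrightarrow> gmap f (gscale B k X) = gscale C k (gmap f X)"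
  using hom unfolding cdga_hom_def homog_def gmap_def gscale_def by auto
lemma gmap_gmul [simp]: "homog B X \<Longrightarrow> homog B Y \<Longrightarrow> gmap f (gmul B X Y) = gmul C (gmap f X) (gmap f Y)"
  using hom unfolding cdga_hom_def homog_def gmap_def gmul_def by auto
lemma gmap_gdiff [simp]: "homog B X \<Longrightarrow> gmap f (gdiff B X) = gdiff C (gmap f X)"
  using hom unfolding cdga_hom_def homog_def gmap_def gdiff_def by auto
lemma gmap_gzero [simp]: "gmap f (gzero B i) = gzero C i"
  using gmap_gscale[of "gzero B i" 0] by simp
lemma gmap_gsub [simp]: "homog B X \<Longrightarrow> homog B Y \<Longrightarrow> fst Y = fst X \<Longrightarrow>
    gmap f (gsub B X Y) = gsub C (gmap f X) (gmap f Y)"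
  unfolding gsub_def by simp

lemma cocycle_gmap: "cocycle B X \<Longrightarrow> cocycle C (gmap f X)"
  unfolding cocycle_def by (metis homog_gmap gmap_gdiff gmap_gzero fst_gmap)

lemma defining_system_gmap:
  "homog B a \<Longrightarrow> homog B b \<Longrightarrow> homog B c \<Longrightarrow> defining_system B a b c u v \<Longrightarrow>
    defining_system C (gmap f a) (gmap f b) (gmap f c) (gmap f u) (gmap f v)"
  unfolding defining_system_def by (metis homog_gmap gmap_gdiff gmap_gmul)

lemma gmap_massey_rep:
  "homog B a \<Longrightarrow> homog B c \<Longrightarrow> homog B u \<Longrightarrow> homog B v \<Longrightarrow> fst u + fst c = fst a + fst v \<Longrightarrow>
    gmap f (massey_rep B a c u v) = massey_rep C (gmap f a) (gmap f c) (gmap f u) (gmap f v)"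
  unfolding massey_rep_def by simp

lemma in_indeterminacy_gmap:
  assumes X: "in_indeterminacy B a c X" and a: "homog B a" and c: "homog B c"
  shows "in_indeterminacy C (gmap f a) (gmap f c) (gmap f X)"
proof -
  obtain z w e where zwe: "cocycle B z" "cocycle B w" "homog B e" "fst a + fst z = fst X"
      "fst w + fst c = fst X" "fst e + 1 = fst X" "X = gadd B (gadd B (gmul B a z) (gmul B w c)) (gdiff B e)"
    using X by (rule in_indeterminacyE)
  then have "gmap f X
      = gadd C (gadd C (gmul C (gmap f a) (gmap f z)) (gmul C (gmap f w) (gmap f c))) (gdiff C (gmap f e))"
    using a c B.cocycle_homog by simp
  moreover have "in_indeterminacy C (gmap f a) (gmap f c) \<dots>"
    using a c zwe by (intro C.in_indeterminacyI cocycle_gmap) auto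
  ultimately show ?thesis by simp
qed

lemma coboundary_reflect:
  assumes X: "cocycle B X" and FX: "coboundary C (gmap f X)"
  shows "coboundary B X"
proof -
  obtain i x where Xe: "X = (i, x)" by fastforce
  have x: "x \<in> cocyc B i"
    using X unfolding Xe cocycle_def cocyc_def homog_def gdiff_def gzero_def by simp
  obtain e where e: "homog C e" "gmap f X = gdiff C e"
    using FX coboundary_def by blast
  then have "fst e = i - 1" "f i x = df C (i - 1) (snd e)"
    unfolding Xe gmap_def gdiff_def by auto
  then have "f i x \<in> cobdry C i"
    using e(1) unfolding cobdry_def homog_def by auto
  then have "x \<in> cobdry B i"
    using quasi_iso x unfolding quasi_iso_def by blast
  then obtain e' where "e' \<in> cmp B (i - 1)" "x = df B (i - 1) e'"
    unfolding cobdry_def by auto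
  then have "homog B (i - 1, e')" "X = gdiff B (i - 1, e')"
    by (simp_all add: Xe homog_def gdiff_def)
  then show ?thesis
    unfolding coboundary_def by blast
qed

lemma cocycle_lift:
  assumes W: "cocycle C W"
  obtains Z \<eta> where "cocycle B Z" "homog C \<eta>" "fst Z = fst W" "fst \<eta> = fst W - 1"
    "gmap f Z = gadd C W (gdiff C \<eta>)"
proof -
  obtain i w where We: "W = (i, w)" by fastforce
  have "w \<in> cocyc C i"
    using W unfolding We cocycle_def cocyc_def homog_def gdiff_def gzero_def by simp
  then obtain z where z: "z \<in> cocyc B i" "ad C i (f i z) (sc C i (-1) w) \<in> cobdry C i"
    using quasi_iso unfolding quasi_iso_def by blast
  then obtain e where e: "e \<in> cmp C (i - 1)" "ad C i (f i z) (sc C i (-1) w) = df C (i - 1) e"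
    unfolding cobdry_def by auto
  have Z: "cocycle B (i, z)"
    using z(1) unfolding cocycle_def cocyc_def homog_def gdiff_def gzero_def by simp
  have \<eta>: "homog C (i - 1, e)"
    using e(1) by (simp add: homog_def)
  have hW: "homog C W" "homog C (gmap f (i, z))"
    using W Z C.cocycle_homog B.cocycle_homog by auto
  have "gsub C (gmap f (i, z)) W = gdiff C (i - 1, e)"
    using e(2) by (simp add: We gsub_def gadd_def gscale_def gmap_def gdiff_def)
  then have "gmap f (i, z) = gadd C (gdiff C (i - 1, e)) W"
    using C.gsub_gadd_cancel[of "gmap f (i, z)" W] hW We by simp
  also have "\<dots> = gadd C W (gdiff C (i - 1, e))"
    using C.gadd_commute hW \<eta> We by simp
  finally show ?thesis
    using that Z \<eta> We by simp
qed

lemma in_indeterminacy_reflect: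
  assumes a: "cocycle B a" and c: "cocycle B c" and X: "cocycle B X"
    and FX: "in_indeterminacy C (gmap f a) (gmap f c) (gmap f X)"
  shows "in_indeterminacy B a c X"
proof -
  have ha: "homog B a" "homog B c" "homog B X"
    using a c X B.cocycle_homog by auto
  obtain z w e where zwe: "cocycle C z" "cocycle C w" "homog C e" "fst a + fst z = fst X"
      "fst w + fst c = fst X" "fst e + 1 = fst X"
      "gmap f X = gadd C (gadd C (gmul C (gmap f a) z) (gmul C w (gmap f c))) (gdiff C e)"
    by (rule in_indeterminacyE[OF FX, unfolded fst_gmap])
  obtain z0 \<zeta> where z0: "cocycle B z0" "homog C \<zeta>" "fst z0 = fst z" "fst \<zeta> = fst z - 1"
      "gmap f z0 = gadd C z (gdiff C \<zeta>)"
    using cocycle_lift[OF zwe(1)] by blast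
  obtain w0 \<eta> where w0: "cocycle B w0" "homog C \<eta>" "fst w0 = fst w" "fst \<eta> = fst w - 1"
      "gmap f w0 = gadd C w (gdiff C \<eta>)"
    using cocycle_lift[OF zwe(2)] by blast
  have hz: "homog C z" "homog C w" "homog B z0" "homog B w0"
    using zwe z0 w0 C.cocycle_homog B.cocycle_homog by auto
  let ?Y = "gadd B (gmul B a z0) (gmul B w0 c)"
  let ?P = "gadd C (gmul C (gmap f a) z) (gmul C w (gmap f c))"
  let ?Q = "gadd C (gmul C (gmap f a) (gdiff C \<zeta>)) (gmul C (gdiff C \<eta>) (gmap f c))"
  have degY: "fst ?Y = fst X" and hY: "homog B ?Y"
    using ha hz zwe z0 w0 by simp_all
  have "gmap f ?Y = gadd C ?P ?Q"
    using ha hz zwe z0 w0 by (simp add: C.gadd_ac)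
  then have "gmap f (gsub B X ?Y) = gsub C (gdiff C e) ?Q"
    using ha hY degY zwe z0 w0 hz C.gsub_gadd_gadd by simp
  moreover have "coboundary C (gsub C (gdiff C e) ?Q)"
    using zwe z0 w0 a c cocycle_gmap
    by (intro C.coboundary_gsub C.coboundary_gadd C.coboundary_gmul_left C.coboundary_gmul_right) auto
  ultimately have "coboundary B (gsub B X ?Y)"
    using coboundary_reflect B.cocycle_gsub B.cocycle_gadd B.cocycle_gmul X a c z0 w0 zwe degY by auto
  then have "in_indeterminacy B a c (gsub B X ?Y)"
    using B.coboundary_in_indeterminacy ha by blast
  moreover have "in_indeterminacy B a c ?Y"
    using ha a c z0 w0 zwe
    by (intro B.in_indeterminacy_gadd B.gmul_left_in_indeterminacy B.gmul_right_in_indeterminacy) auto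
  ultimately have "in_indeterminacy B a c (gadd B (gsub B X ?Y) ?Y)"
    using B.in_indeterminacy_gadd ha degY by simp
  then show ?thesis
    using B.gsub_gadd_cancel ha hY degY by simp
qed

lemma all_massey_products_vanish_reflect:
  assumes vanish: "all_massey_products_vanish C"
  shows "all_massey_products_vanish B"
  unfolding all_massey_products_vanish_def massey_product_vanishes_def
proof (intro allI impI)
  fix a b c u v
  assume a: "cocycle B a" and b: "cocycle B b" and c: "cocycle B c" and ds: "defining_system B a b c u v"
  have h: "homog B a" "homog B b" "homog B c" "homog B u" "homog B v"
    using a b c ds B.cocycle_homog unfolding defining_system_def by auto
  have deg: "fst u + fst c = fst a + fst v"
    using defining_system_degrees[OF ds] by simp
  have "in_indeterminacy C (gmap f a) (gmap f c) (massey_rep C (gmap f a) (gmap f c) (gmap f u) (gmap f v))"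
    using vanish defining_system_gmap[OF h(1-3) ds] a b c cocycle_gmap
    unfolding all_massey_products_vanish_def massey_product_vanishes_def by blast
  then have "in_indeterminacy C (gmap f a) (gmap f c) (gmap f (massey_rep B a c u v))"
    using gmap_massey_rep h deg by simp
  then show "in_indeterminacy B a c (massey_rep B a c u v)"
    using in_indeterminacy_reflect a c B.massey_rep_cocycle[OF a b c ds] by blast
qed

lemma defining_system_reflect:
  assumes a: "cocycle B a" and b: "cocycle B b" and c: "cocycle B c"
    and ds: "defining_system C (gmap f a) (gmap f b) (gmap f c) u' v'"
  obtains u v where "defining_system B a b c u v"
proof -
  have "gmap f (gmul B a b) = gdiff C u'" "gmap f (gmul B b c) = gdiff C v'"
    and "homog C u'" "homog C v'"
    using ds a b c B.cocycle_homog unfolding defining_system_def by simp_all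
  then have "coboundary C (gmap f (gmul B a b))" "coboundary C (gmap f (gmul B b c))"
    by simp_all
  then have "coboundary B (gmul B a b)" "coboundary B (gmul B b c)"
    using coboundary_reflect B.cocycle_gmul a b c by blast+
  then show ?thesis
    using that unfolding coboundary_def defining_system_def by metis
qed

text \<open>Lift a, b, c to cocycles of B, whose images are cohomologous to a, b, c; a defining system
  for the lifts exists because f is injective on cohomology, and it maps to one for the images.\<close>

lemma all_massey_products_vanish_transfer:
  assumes vanish: "all_massey_products_vanish B"
  shows "all_massey_products_vanish C"
  unfolding all_massey_products_vanish_def
proof (intro allI impI)
  fix a b c assume a: "cocycle C a" and b: "cocycle C b" and c: "cocycle C c"
  obtain a0 \<alpha> where a0: "cocycle B a0" "homog C \<alpha>" "fst a0 = fst a" "fst \<alpha> = fst a - 1"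
      "gmap f a0 = gadd C a (gdiff C \<alpha>)"
    using cocycle_lift[OF a] by blast
  obtain b0 \<beta> where b0: "cocycle B b0" "homog C \<beta>" "fst b0 = fst b" "fst \<beta> = fst b - 1"
      "gmap f b0 = gadd C b (gdiff C \<beta>)"
    using cocycle_lift[OF b] by blast
  obtain c0 \<gamma> where c0: "cocycle B c0" "homog C \<gamma>" "fst c0 = fst c" "fst \<gamma> = fst c - 1"
      "gmap f c0 = gadd C c (gdiff C \<gamma>)"
    using cocycle_lift[OF c] by blast
  have h0: "homog B a0" "homog B b0" "homog B c0"
    using a0 b0 c0 B.cocycle_homog by auto
  show "massey_product_vanishes C a b c"
    unfolding massey_product_vanishes_def
  proof (intro allI impI)
    fix u v assume ds: "defining_system C a b c u v"
    obtain u' v' where ds': "defining_system C (gmap f a0) (gmap f b0) (gmap f c0) u' v'"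
      using C.defining_system_cohomologous[OF a b c a0(2,4) b0(2,4) c0(2,4) ds,
          folded a0(5) b0(5) c0(5)] by blast
    obtain u0 v0 where ds0: "defining_system B a0 b0 c0 u0 v0"
      using defining_system_reflect[OF a0(1) b0(1) c0(1) ds'] .
    have hu0: "homog B u0" "homog B v0" "fst u0 + fst c0 = fst a0 + fst v0"
      using ds0 defining_system_degrees[OF ds0] unfolding defining_system_def by auto
    have "in_indeterminacy B a0 c0 (massey_rep B a0 c0 u0 v0)"
      using vanish a0 b0 c0 ds0 unfolding all_massey_products_vanish_def massey_product_vanishes_def by blast
    then have "in_indeterminacy C (gmap f a0) (gmap f c0) (gmap f (massey_rep B a0 c0 u0 v0))"
      using in_indeterminacy_gmap h0 by blast
    then have "in_indeterminacy C (gmap f a0) (gmap f c0)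
        (massey_rep C (gmap f a0) (gmap f c0) (gmap f u0) (gmap f v0))"
      using gmap_massey_rep h0 hu0 by simp
    then have "massey_product_vanishes C (gmap f a0) (gmap f b0) (gmap f c0)"
      by (rule C.massey_product_vanishesI[OF homog_gmap[OF h0(1)] homog_gmap[OF h0(3)]
          defining_system_gmap[OF h0 ds0]])
    then have "massey_product_vanishes C a b c"
      using C.massey_product_vanishes_cohomologous[OF a b c a0(2,4) b0(2,4) c0(2,4),
          folded a0(5) b0(5) c0(5)] by blast
    then show "in_indeterminacy C a c (massey_rep C a c u v)"
      using ds unfolding massey_product_vanishes_def by blast
  qed
qed

end

lemma qlink_all_massey_products_vanish_iff:
  assumes "qlink P Q"
  shows "all_massey_products_vanish P \<longleftrightarrow> all_massey_products_vanish Q"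
  using assms unfolding qlink_def
proof
  assume "\<exists>f. quasi_iso P Q f"
  then obtain f where "cdga_quasi_iso P Q f"
    by (auto simp: cdga_quasi_iso_def)
  then show ?thesis
    using cdga_quasi_iso.all_massey_products_vanish_reflect cdga_quasi_iso.all_massey_products_vanish_transfer
    by blast
next
  assume "\<exists>g. quasi_iso Q P g"
  then obtain g where "cdga_quasi_iso Q P g"
    by (auto simp: cdga_quasi_iso_def)
  then show ?thesis
    using cdga_quasi_iso.all_massey_products_vanish_reflect cdga_quasi_iso.all_massey_products_vanish_transfer
    by blast
qed

lemma all_massey_products_vanish_cohom:
  assumes "is_cdga (cohom A)"
  shows "all_massey_products_vanish (cohom A)"
proof -
  interpret cdga_struct "cohom A"
    using assms by (rule cdga_struct.intro)
  show ?thesis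
    by (rule all_massey_products_vanish_if_zero_diff) (simp add: gdiff_def gzero_def cohom_def)
qed

lemma formal_in_imp_all_massey_products_vanish:
  fixes A :: "('k::field, 'a) cdga"
  assumes "formal_in TYPE('z) A"
  shows "all_massey_products_vanish A"
proof -
  obtain cs :: "('k, 'z) cdga list" where zz: "zigzag_via cs A (cohom A)"
    using assms unfolding formal_in_def by blast
  have cohom: "qlink P (cohom A) \<Longrightarrow> all_massey_products_vanish P" for P :: "('k, 'b) cdga"
    using qlink_all_massey_products_vanish_iff all_massey_products_vanish_cohom
    unfolding qlink_def quasi_iso_def by metis
  show ?thesis
  proof (cases "cs = []")
    case True
    then show ?thesis
      using zz cohom unfolding zigzag_via_def by simp
  next
    case False
    then have first: "qlink A (hd cs)" and step: "\<And>k. Suc k < length cs \<Longrightarrow> qlink (cs ! k) (cs ! Suc k)"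
      and last: "qlink (last cs) (cohom A)"
      using zz unfolding zigzag_via_def by auto
    have ind: "all_massey_products_vanish A \<longleftrightarrow> all_massey_products_vanish (cs ! k)" if "k < length cs" for k
      using that
    proof (induction k)
      case 0
      then show ?case using first qlink_all_massey_products_vanish_iff False by (simp add: hd_conv_nth)
    next
      case (Suc k)
      then show ?case using step qlink_all_massey_products_vanish_iff by auto
    qed
    have "all_massey_products_vanish (cs ! (length cs - 1))"
      using cohom[OF last] False by (simp add: last_conv_nth)
    then show ?thesis
      using ind[of "length cs - 1"] False by simp
  qed
qed

section \<open>Poincare duality with trivial differential\<close>

locale trivial_diff_cdga = cdga_struct +
  assumes trivial_diff: "\<forall>i. \<forall>x\<in>cmp A i. df A i x = zr A (i + 1)"
begin

lemma gdiff_trivial: "homog A X \<Longrightarrow> gdiff A X = gzero A (fst X + 1)"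
  using trivial_diff by (simp add: homog_def gdiff_def gzero_def)

lemma cobdry_trivial: "cobdry A i = {zr A i}"
proof -
  have "\<forall>e\<in>cmp A (i - 1). df A (i - 1) e = zr A i"
    using trivial_diff by (metis diff_add_cancel)
  then show ?thesis
    unfolding cobdry_def using zr_closed[of "i - 1"] by auto
qed

lemma coset_trivial: "x \<in> cmp A i \<Longrightarrow> coset A i x = {x}"
  unfolding coset_def cobdry_trivial using ad_zr_right by auto

lemma cocyc_trivial: "cocyc A i = cmp A i"
  unfolding cocyc_def using trivial_diff by auto

lemma crep_singleton:
  assumes x: "x \<in> cmp A i"
  shows "crep A i {x} = x"
proof -
  have "\<exists>z. z \<in> cocyc A i \<and> {x} = coset A i z"
    using x coset_trivial cocyc_trivial by blast
  then have "crep A i {x} \<in> cocyc A i \<and> {x} = coset A i (crep A i {x})"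
    unfolding crep_def by (rule someI_ex)
  then show ?thesis
    using coset_trivial cocyc_trivial by auto
qed

lemma cmp_cohom: "cmp (cohom A) i = (\<lambda>x. {x}) ` cmp A i"
  unfolding cohom_def using coset_trivial cocyc_trivial by auto

lemma zr_cohom: "zr (cohom A) i = {zr A i}"
  unfolding cohom_def using coset_trivial zr_closed by simp

lemma sc_cohom: "x \<in> cmp A i \<Longrightarrow> sc (cohom A) i c {x} = {sc A i c x}"
  unfolding cohom_def using coset_trivial crep_singleton sc_closed by simp

lemma ml_cohom: "x \<in> cmp A i \<Longrightarrow> y \<in> cmp A j \<Longrightarrow> ml (cohom A) i j {x} {y} = {ml A i j x y}"
  unfolding cohom_def using coset_trivial crep_singleton ml_closed by simp

lemma lin_functional_zr:
  assumes "lin_functional (cohom A) k \<phi>"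
  shows "\<phi> {zr A k} = 0"
proof -
  have "{zr A k} \<in> cmp (cohom A) k"
    using cmp_cohom zr_closed by blast
  then have "\<phi> (sc (cohom A) k 0 {zr A k}) = 0"
    using assms unfolding lin_functional_def by simp
  then show ?thesis
    using sc_cohom[OF zr_closed] sc_zr by simp
qed

end

locale poincare_trivial_diff = trivial_diff_cdga +
  fixes N :: int and \<alpha> :: "'a set \<Rightarrow> 'k::field" and \<omega> :: 'a
  assumes pclass: "poincare_class (cohom A) N \<alpha>"
    and omega_in: "\<omega> \<in> cmp A N"
    and omega_span: "\<forall>X\<in>cmp (cohom A) N. \<exists>c. X = sc (cohom A) N c (coset A N \<omega>)"
begin

lemma top_degree_multiple_omega:
  assumes "m \<in> cmp A N"
  obtains c where "m = sc A N c \<omega>"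
proof -
  have "{m} \<in> cmp (cohom A) N"
    using assms cmp_cohom by blast
  then obtain c where "{m} = sc (cohom A) N c (coset A N \<omega>)"
    using omega_span by blast
  then show ?thesis
    using that coset_trivial[OF omega_in] sc_cohom[OF omega_in] by simp
qed

lemma poincare_pairing_nondegenerate:
  assumes x: "x \<in> cmp A p" and nz: "x \<noteq> zr A p"
  obtains y where "y \<in> cmp A (N - p)" "\<alpha> {ml A p (N - p) x y} \<noteq> 0"
proof -
  have "{x} \<in> cmp (cohom A) p" "{x} \<noteq> zr (cohom A) p"
    using x nz cmp_cohom zr_cohom by auto
  then obtain Y where Y: "Y \<in> cmp (cohom A) (N - p)" "\<alpha> (ml (cohom A) p (N - p) {x} Y) \<noteq> 0"
    using pclass unfolding poincare_class_def by blast
  then obtain y where "y \<in> cmp A (N - p)" "Y = {y}"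
    using cmp_cohom by auto
  then show ?thesis
    using that Y(2) ml_cohom[OF x] by simp
qed

lemma poincare_partner:
  assumes x: "x \<in> cmp A p" and nz: "x \<noteq> zr A p"
  obtains y where "y \<in> cmp A (N - p)" "ml A p (N - p) x y = \<omega>"
proof -
  obtain y where y: "y \<in> cmp A (N - p)" and ne: "\<alpha> {ml A p (N - p) x y} \<noteq> 0"
    using poincare_pairing_nondegenerate[OF x nz] .
  obtain c where c: "ml A p (N - p) x y = sc A N c \<omega>"
    using top_degree_multiple_omega ml_closed[OF x y] by auto
  have "c \<noteq> 0"
    using ne c sc_zero[OF omega_in] lin_functional_zr pclass unfolding poincare_class_def by auto
  have "ml A p (N - p) x (sc A (N - p) (inverse c) y) = sc A N (inverse c) (sc A N c \<omega>)"
    using ml_sc_right[OF x y] c by simp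
  also have "\<dots> = \<omega>"
    using sc_mult[OF omega_in, of "inverse c" c, symmetric] \<open>c \<noteq> 0\<close> sc_one[OF omega_in] by simp
  finally show ?thesis
    using that sc_closed[OF y] by blast
qed

lemma ml_omega_eq_zr_imp:
  assumes z: "z \<in> cmp A 0" and z\<omega>: "ml A 0 N z \<omega> = zr A N"
  shows "z = zr A 0"
proof (rule ccontr)
  assume "z \<noteq> zr A 0"
  then obtain y where y: "y \<in> cmp A N" and ne: "\<alpha> {ml A 0 N z y} \<noteq> 0"
    using poincare_pairing_nondegenerate[OF z] by auto
  obtain c where "y = sc A N c \<omega>"
    using top_degree_multiple_omega[OF y] .
  then have "ml A 0 N z y = zr A N"
    using ml_sc_right[OF z omega_in] z\<omega> sc_zr by simp
  then show False
    using ne lin_functional_zr pclass unfolding poincare_class_def by auto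
qed

end

section \<open>The extension by theta\<close>

definition theta_base :: "int \<times> ('a \<times> 'a) \<Rightarrow> int \<times> 'a" where
  "theta_base X = (fst X, fst (snd X))"

definition theta_coeff :: "nat \<Rightarrow> int \<times> ('a \<times> 'a) \<Rightarrow> int \<times> 'a" where
  "theta_coeff n X = (fst X - (2 * int n - 1), snd (snd X))"

lemma fst_theta_base [simp]: "fst (theta_base X) = fst X"
  by (simp add: theta_base_def)

lemma fst_theta_coeff [simp]: "fst (theta_coeff n X) = fst X - (2 * int n - 1)"
  by (simp add: theta_coeff_def)

lemma A_theta_eqI: "theta_base X = theta_base Y \<Longrightarrow> theta_coeff n X = theta_coeff n Y \<Longrightarrow> X = Y"
  by (cases X, cases Y) (auto simp: theta_base_def theta_coeff_def)

lemma A_theta_simps: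
  "cmp (A_theta A n \<omega>) k = cmp A k \<times> cmp A (k - (2 * int n - 1))"
  "zr (A_theta A n \<omega>) k = (zr A k, zr A (k - (2 * int n - 1)))"
  "ad (A_theta A n \<omega>) k P Q = (ad A k (fst P) (fst Q), ad A (k - (2 * int n - 1)) (snd P) (snd Q))"
  "sc (A_theta A n \<omega>) k c P = (sc A k c (fst P), sc A (k - (2 * int n - 1)) c (snd P))"
  "ml (A_theta A n \<omega>) k l P Q = (ml A k l (fst P) (fst Q),
      ad A (k + l - (2 * int n - 1)) (ml A k (l - (2 * int n - 1)) (fst P) (snd Q))
        (sc A (k + l - (2 * int n - 1)) (psign l) (ml A (k - (2 * int n - 1)) l (snd P) (fst Q))))"
  "df (A_theta A n \<omega>) k P = (ad A (k + 1) (df A k (fst P))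
      (sc A (k + 1) (psign (k - (2 * int n - 1))) (ml A (k - (2 * int n - 1)) (2 * int n) (snd P) \<omega>)),
      df A (k - (2 * int n - 1)) (snd P))"
  by (simp_all add: A_theta_def Let_def)

lemma homog_A_theta_iff: "homog (A_theta A n \<omega>) X \<longleftrightarrow> homog A (theta_base X) \<and> homog A (theta_coeff n X)"
  by (auto simp add: homog_def theta_base_def theta_coeff_def A_theta_simps mem_Times_iff)

lemma theta_base_gadd: "theta_base (gadd (A_theta A n \<omega>) X Y) = gadd A (theta_base X) (theta_base Y)"
  by (simp add: theta_base_def gadd_def A_theta_simps)
lemma theta_coeff_gadd: "theta_coeff n (gadd (A_theta A n \<omega>) X Y) = gadd A (theta_coeff n X) (theta_coeff n Y)"
  by (simp add: theta_coeff_def gadd_def A_theta_simps)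
lemma theta_base_gscale: "theta_base (gscale (A_theta A n \<omega>) c X) = gscale A c (theta_base X)"
  by (simp add: theta_base_def gscale_def A_theta_simps)
lemma theta_coeff_gscale: "theta_coeff n (gscale (A_theta A n \<omega>) c X) = gscale A c (theta_coeff n X)"
  by (simp add: theta_coeff_def gscale_def A_theta_simps)
lemma theta_base_gmul: "theta_base (gmul (A_theta A n \<omega>) X Y) = gmul A (theta_base X) (theta_base Y)"
  by (simp add: theta_base_def gmul_def A_theta_simps)
lemma theta_coeff_gmul: "theta_coeff n (gmul (A_theta A n \<omega>) X Y) =
    gadd A (gmul A (theta_base X) (theta_coeff n Y)) (gscale A (psign (fst Y)) (gmul A (theta_coeff n X) (theta_base Y)))"
proof -
  have deg: "fst X + (fst Y - (2 * int n - 1)) = fst X + fst Y - (2 * int n - 1)"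
    "fst X - (2 * int n - 1) + fst Y = fst X + fst Y - (2 * int n - 1)" by simp_all
  show ?thesis
    by (simp add: theta_base_def theta_coeff_def gmul_def gadd_def gscale_def A_theta_simps deg)
qed
lemma theta_base_gdiff: "theta_base (gdiff (A_theta A n \<omega>) X) =
    gadd A (gdiff A (theta_base X)) (gscale A (psign (fst X - (2 * int n - 1))) (gmul A (theta_coeff n X) (2 * int n, \<omega>)))"
proof -
  have deg: "fst X - (2 * int n - 1) + 2 * int n = fst X + 1" by simp
  show ?thesis
    by (simp add: theta_base_def theta_coeff_def gdiff_def gmul_def gadd_def gscale_def A_theta_simps deg)
qed
lemma theta_coeff_gdiff: "theta_coeff n (gdiff (A_theta A n \<omega>) X) = gdiff A (theta_coeff n X)"
proof -
  have deg: "fst X + 1 - (2 * int n - 1) = fst X - (2 * int n - 1) + 1" by simp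
  show ?thesis
    by (simp add: theta_coeff_def gdiff_def A_theta_simps deg)
qed
lemma theta_base_gzero: "theta_base (gzero (A_theta A n \<omega>) k) = gzero A k"
  by (simp add: theta_base_def gzero_def A_theta_simps)
lemma theta_coeff_gzero: "theta_coeff n (gzero (A_theta A n \<omega>) k) = gzero A (k - (2 * int n - 1))"
  by (simp add: theta_coeff_def gzero_def A_theta_simps)

lemmas theta_projections = theta_base_gadd theta_coeff_gadd theta_base_gscale theta_coeff_gscale
  theta_base_gmul theta_coeff_gmul theta_base_gdiff theta_coeff_gdiff theta_base_gzero theta_coeff_gzero

locale theta_extension = poincare_trivial_diff A "2 * int n" \<alpha> \<omega>
  for A :: "('k::field, 'a) cdga" and n :: nat and \<alpha> :: "'a set \<Rightarrow> 'k" and \<omega> :: 'a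
begin

abbreviation "T \<equiv> A_theta A n \<omega>"

definition incl :: "int \<times> 'a \<Rightarrow> int \<times> ('a \<times> 'a)" where
  "incl X = (fst X, (snd X, zr A (fst X - (2 * int n - 1))))"

definition theta :: "int \<times> ('a \<times> 'a)" where
  "theta = (2 * int n - 1, (zr A (2 * int n - 1), un A))"

lemma fst_incl [simp]: "fst (incl X) = fst X"
  by (simp add: incl_def)
lemma theta_base_incl [simp]: "theta_base (incl X) = X"
  by (simp add: incl_def theta_base_def)
lemma theta_coeff_incl [simp]: "theta_coeff n (incl X) = gzero A (fst X - (2 * int n - 1))"
  by (simp add: incl_def theta_coeff_def gzero_def)
lemma fst_theta [simp]: "fst theta = 2 * int n - 1"
  by (simp add: theta_def)
lemma theta_base_theta [simp]: "theta_base theta = gzero A (2 * int n - 1)"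
  by (simp add: theta_def theta_base_def gzero_def)
lemma theta_coeff_theta [simp]: "theta_coeff n theta = (0, un A)"
  by (simp add: theta_def theta_coeff_def)

lemma homog_incl: "homog A X \<Longrightarrow> homog T (incl X)"
  by (simp add: homog_A_theta_iff)
lemma homog_theta: "homog T theta"
  by (simp add: homog_A_theta_iff homog_unit)

lemma homog_omega: "homog A (2 * int n, \<omega>)"
  using omega_in by (simp add: homog_def)

lemma cocycle_incl: "homog A X \<Longrightarrow> cocycle T (incl X)"
  unfolding cocycle_def using homog_omega
  by (auto intro!: A_theta_eqI[where n = n] simp: homog_incl theta_projections gdiff_trivial diff_add_eq)

lemma gmul_incl: "homog A X \<Longrightarrow> homog A Y \<Longrightarrow> gmul T (incl X) (incl Y) = incl (gmul A X Y)"
  by (rule A_theta_eqI[where n = n]) (simp_all add: theta_projections add_diff_eq diff_add_eq)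

lemma gdiff_theta: "gdiff T theta = incl (2 * int n, \<omega>)"
  using homog_omega
  by (intro A_theta_eqI[where n = n]) (simp_all add: theta_projections gdiff_trivial homog_unit)

lemma gdiff_neg_theta: "gdiff T (gscale T (-1) theta) = incl (gscale A (-1) (2 * int n, \<omega>))"
  using homog_omega
  by (intro A_theta_eqI[where n = n]) (simp_all add: theta_projections gdiff_trivial homog_unit)

text \<open>The theta-coefficient z of such a cocycle satisfies z omega = 0 in degree 2n.\<close>

lemma A_theta_cocycle_theta_coeff:
  assumes Z: "cocycle T Z" and deg: "fst Z = 2 * int n - 1"
  shows "theta_coeff n Z = gzero A 0"
proof -
  have hZ: "homog A (theta_base Z)" "homog A (theta_coeff n Z)"
    using Z by (simp_all add: homog_A_theta_iff cocycle_def)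
  have "theta_base (gdiff T Z) = theta_base (gzero T (fst Z + 1))"
    using Z cocycle_def by metis
  then have "gscale A (psign (fst Z - (2 * int n - 1))) (gmul A (theta_coeff n Z) (2 * int n, \<omega>))
      = gzero A (fst Z + 1)"
    using hZ homog_omega by (simp add: theta_projections gdiff_trivial)
  then have "gmul A (theta_coeff n Z) (2 * int n, \<omega>) = gzero A (fst Z + 1)"
    using deg hZ homog_omega by simp
  moreover obtain z where z: "theta_coeff n Z = (0, z)"
    using deg by (simp add: theta_coeff_def)
  ultimately have "ml A 0 (2 * int n) z \<omega> = zr A (2 * int n)"
    using deg by (simp add: gmul_def gzero_def)
  then have "z = zr A 0"
    using ml_omega_eq_zr_imp hZ(2) z by (simp add: homog_def)
  then show ?thesis
    using z by (simp add: gzero_def)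
qed

lemma A_theta_in_indeterminacy_theta_coeff:
  assumes a: "homog A a" and c: "homog A c" "fst c = fst a"
    and X: "in_indeterminacy T (incl a) (incl c) X" "fst X = fst a + (2 * int n - 1)"
  shows "theta_coeff n X = gzero A (fst a)"
proof -
  obtain z w e where zwe: "cocycle T z" "cocycle T w" "homog T e" "fst a + fst z = fst X"
      "fst w + fst c = fst X" "fst e + 1 = fst X"
      "X = gadd T (gadd T (gmul T (incl a) z) (gmul T w (incl c))) (gdiff T e)"
    by (rule in_indeterminacyE[OF X(1), unfolded fst_incl])
  have deg: "fst z = 2 * int n - 1" "fst w = 2 * int n - 1"
    using zwe(4,5) X(2) c(2) by simp_all
  have h: "homog A (theta_base z)" "homog A (theta_base w)" "homog A (theta_coeff n e)"
    using zwe(1-3) by (simp_all add: homog_A_theta_iff cocycle_def)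
  show ?thesis
    unfolding zwe(7) using h a c zwe(6) X(2) deg
      A_theta_cocycle_theta_coeff[OF zwe(1)] A_theta_cocycle_theta_coeff[OF zwe(2)]
    by (simp add: theta_projections gdiff_trivial)
qed

lemma theta_coeff_massey_rep_theta:
  assumes x: "homog A x" and p: "odd (fst x)"
  shows "theta_coeff n (massey_rep T (incl x) (incl x) theta (gscale T (-1) theta)) = gscale A (-2) x"
proof -
  have "psign (fst x) = (-1 :: 'k)"
    using p by (simp add: psign_def)
  then have "theta_coeff n (massey_rep T (incl x) (incl x) theta (gscale T (-1) theta))
      = gadd A (gscale A (-1) x) (gscale A (-1) x)"
    using x homog_unit by (simp add: massey_rep_def theta_projections)
  also have "\<dots> = gscale A (-2) x"
    using gadd_gscale_same[OF x, of "-1" "-1"] by simp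
  finally show ?thesis .
qed

lemma A_theta_massey_product_nonvanishing:
  assumes two: "(2::'k) \<noteq> 0" and x: "x \<in> cmp A p" "x \<noteq> zr A p" and p: "odd p"
  shows "\<not> all_massey_products_vanish T"
proof
  assume vanish: "all_massey_products_vanish T"
  obtain y where y: "y \<in> cmp A (2 * int n - p)" "ml A p (2 * int n - p) x y = \<omega>"
    using poincare_partner[OF x] .
  let ?x = "(p, x)" and ?y = "(2 * int n - p, y)"
  have hx: "homog A ?x" "homog A ?y"
    using x y by (simp_all add: homog_def)
  have xy: "gmul A ?x ?y = (2 * int n, \<omega>)"
    using y by (simp add: gmul_def)
  moreover have "psign ((2 * int n - p) * p) = (-1 :: 'k)"
    using p by (simp add: psign_def)
  ultimately have yx: "gmul A ?y ?x = gscale A (-1) (2 * int n, \<omega>)"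
    using gmul_commute[OF hx(2) hx(1)] by simp
  have "defining_system T (incl ?x) (incl ?y) (incl ?x) theta (gscale T (-1) theta)"
    unfolding defining_system_def
    using hx xy yx homog_theta homog_unit
    by (simp add: gmul_incl gdiff_theta gdiff_neg_theta homog_A_theta_iff theta_projections)
  then have "in_indeterminacy T (incl ?x) (incl ?x) (massey_rep T (incl ?x) (incl ?x) theta (gscale T (-1) theta))"
    using vanish cocycle_incl hx unfolding all_massey_products_vanish_def massey_product_vanishes_def by blast
  then have "theta_coeff n (massey_rep T (incl ?x) (incl ?x) theta (gscale T (-1) theta)) = gzero A p"
    using A_theta_in_indeterminacy_theta_coeff hx by simp
  then have "sc A p (-2) x = zr A p"
    using theta_coeff_massey_rep_theta[OF hx(1)] p by (simp add: gscale_def gzero_def)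
  then have "sc A p (- 1 / 2) (sc A p (-2) x) = zr A p"
    using sc_zr by simp
  then show False
    using sc_mult[OF x(1), of "- 1 / 2" "-2", symmetric] sc_one[OF x(1)] two x(2) by simp
qed

end

theorem lemma3p6:
  fixes A :: "('k::field_char_0, 'a) cdga" and n :: nat and \<omega> :: 'a
    and \<alpha> :: "'a set \<Rightarrow> 'k"
  assumes cdga: "is_cdga A"
    and triv_d: "\<forall>i. \<forall>x\<in>cmp A i. df A i x = zr A (i + 1)"
    and poinc: "poincare_cdga A (2 * int n)"
    and pclass: "poincare_class (cohom A) (2 * int n) \<alpha>"
    and omega_in: "\<omega> \<in> cmp A (2 * int n)"
    and omega_dual: "\<alpha> (coset A (2 * int n) \<omega>) = 1"
    and omega_span: "\<forall>X\<in>cmp (cohom A) (2 * int n).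
                        \<exists>c. X = sc (cohom A) (2 * int n) c (coset A (2 * int n) \<omega>)"
    and neg_zero: "\<forall>i < 0. cmp A i = {zr A i}"
    and formal: "formal_in TYPE('z) (A_theta A n \<omega>)"
  shows "\<forall>i::int. cmp A (2 * i + 1) = {zr A (2 * i + 1)}"
proof
  fix i :: int
  interpret theta_extension A n \<alpha> \<omega>
    using cdga triv_d pclass omega_in omega_span
    by (simp add: theta_extension_def poincare_trivial_diff_def poincare_trivial_diff_axioms_def
        trivial_diff_cdga_def trivial_diff_cdga_axioms_def cdga_struct_def)
  have vanish: "all_massey_products_vanish (A_theta A n \<omega>)"
    using formal by (rule formal_in_imp_all_massey_products_vanish)
  show "cmp A (2 * i + 1) = {zr A (2 * i + 1)}"
  proof (rule ccontr)
    assume "cmp A (2 * i + 1) \<noteq> {zr A (2 * i + 1)}"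
    then obtain x where "x \<in> cmp A (2 * i + 1)" "x \<noteq> zr A (2 * i + 1)"
      using zr_closed by blast
    then show False
      using A_theta_massey_product_nonvanishing[of x "2 * i + 1"] vanish by simp
  qed
qed

end
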